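(* Let $(H,\mu_H,\Delta_H,\alpha_H)$ be a Hom-bialgebra and $(A,\mu_A,\alpha_A)$ a left $H$-module Hom-algebra with action $h\otimes a\mapsto h\cdot a$, with $\alpha_H,\alpha_A$ bijective. Then the Hom-smash product $A\# H$ is a right $H$-comodule Hom-algebra via $\rho_{A\# H}:A\# H\to(A\# H)\otimes H$, $\rho_{A\# H}(a\# h)=(\alpha_A(a)\# h_1)\otimes h_2$.
   Context: Over a field $k$, no (co)units assumed; $\Delta(h)=h_1\otimes h_2$. A Hom-associative algebra is $(A,\mu,\alpha)$ with $\alpha(aa')=\alpha(a)\alpha(a')$, $\alpha(a)(a'a'')=(aa')\alpha(a'')$; a morphism $f$ of Hom-associative algebras satisfies $\alpha_B\circ f=f\circ\alpha_A$, $f\circ\mu_A=\mu_B\circ(f\otimes f)$; the tensor product of Hom-associative algebras has componentwise product and structure map. A Hom-bialgebra $(H,\mu,\Delta,\alpha)$: $(H,\mu,\alpha)$ Hom-associative, $\Delta(h_1)\otimes\alpha(h_2)=\alpha(h_1)\otimes\Delta(h_2)$, $\Delta(hh')=h_1h'_1\otimes h_2h'_2$, $\Delta(\alpha(h))=\alpha(h_1)\otimes\alpha(h_2)$. A left $H$-module Hom-algebra is a Hom-associative $(A,\mu_A,\alpha_A)$ with action satisfying $\alpha_A(h\cdot a)=\alpha_H(h)\cdot\alpha_A(a)$, $\alpha_H(h)\cdot(h'\cdot a)=(hh')\cdot\alpha_A(a)$, $\alpha_H^2(h)\cdot(aa')=(h_1\cdot a)(h_2\cdot a')$. The Hom-smash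 product $A\# H$ is $A\otimes H$ with structure map $\alpha_A\otimes\alpha_H$ and product $(a\# h)(a'\# h')=a(\alpha_H^{-2}(h_1)\cdot\alpha_A^{-1}(a'))\#\alpha_H^{-1}(h_2)h'$, a Hom-associative algebra. A right $H$-comodule structure on $(M,\alpha_M)$ is a linear $\rho:M\to M\otimes H$ with $(\alpha_M\otimes\alpha_H)\circ\rho=\rho\circ\alpha_M$ and $(\alpha_M\otimes\Delta_H)\circ\rho=(\rho\otimes\alpha_H)\circ\rho$. A right $H$-comodule Hom-algebra is a Hom-associative algebra $(D,\mu_D,\alpha_D)$ with a right $H$-comodule structure $\rho_D:D\to D\otimes H$ that is a morphism of Hom-associative algebras (to the tensor product $D\otimes H$). *)

theory Defs
  imports Main
begin

record ('k, 'a) vs =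
  vcar :: "'a set"
  vadd :: "'a \<Rightarrow> 'a \<Rightarrow> 'a"
  vzero :: "'a"
  vsc :: "'k \<Rightarrow> 'a \<Rightarrow> 'a"

definition is_vs :: "('k::field, 'a) vs \<Rightarrow> bool" where
  "is_vs V \<longleftrightarrow>
     vzero V \<in> vcar V \<and>
     (\<forall>x\<in>vcar V. \<forall>y\<in>vcar V. vadd V x y \<in> vcar V) \<and>
     (\<forall>c. \<forall>x\<in>vcar V. vsc V c x \<in> vcar V) \<and>
     (\<forall>x\<in>vcar V. \<forall>y\<in>vcar V. \<forall>z\<in>vcar V. vadd V (vadd V x y) z = vadd V x (vadd V y z)) \<and>
     (\<forall>x\<in>vcar V. \<forall>y\<in>vcar V. vadd V x y = vadd V y x) \<and>
     (\<forall>x\<in>vcar V. vadd V (vzero V) x = x) \<and>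
     (\<forall>x\<in>vcar V. \<exists>y\<in>vcar V. vadd V x y = vzero V) \<and>
     (\<forall>c. \<forall>x\<in>vcar V. \<forall>y\<in>vcar V. vsc V c (vadd V x y) = vadd V (vsc V c x) (vsc V c y)) \<and>
     (\<forall>c d. \<forall>x\<in>vcar V. vsc V (c + d) x = vadd V (vsc V c x) (vsc V d x)) \<and>
     (\<forall>c d. \<forall>x\<in>vcar V. vsc V c (vsc V d x) = vsc V (c * d) x) \<and>
     (\<forall>x\<in>vcar V. vsc V 1 x = x)"

definition linear_map :: "('k::field, 'a) vs \<Rightarrow> ('k, 'b) vs \<Rightarrow> ('a \<Rightarrow> 'b) \<Rightarrow> bool" where
  "linear_map V W f \<longleftrightarrow>
     (\<forall>x\<in>vcar V. f x \<in> vcar W) \<and>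
     (\<forall>x\<in>vcar V. \<forall>y\<in>vcar V. f (vadd V x y) = vadd W (f x) (f y)) \<and>
     (\<forall>c. \<forall>x\<in>vcar V. f (vsc V c x) = vsc W c (f x))"

definition bilinear_map ::
  "('k::field, 'a) vs \<Rightarrow> ('k, 'b) vs \<Rightarrow> ('k, 'c) vs \<Rightarrow> ('a \<Rightarrow> 'b \<Rightarrow> 'c) \<Rightarrow> bool" where
  "bilinear_map V W U f \<longleftrightarrow>
     (\<forall>y\<in>vcar W. linear_map V U (\<lambda>x. f x y)) \<and>
     (\<forall>x\<in>vcar V. linear_map W U (\<lambda>y. f x y))"

section \<open>Tensor product V \<otimes> W: formal sums of pairs modulo the bilinearity relations\<close>

definition delta :: "'x \<Rightarrow> 'x \<Rightarrow> 'k::field" where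
  "delta p = (\<lambda>q. if q = p then 1 else 0)"

inductive_set trel :: "('k::field, 'a) vs \<Rightarrow> ('k, 'b) vs \<Rightarrow> ('a \<times> 'b \<Rightarrow> 'k) set"
  for V :: "('k, 'a) vs" and W :: "('k, 'b) vs" where
  zero: "(\<lambda>_. 0) \<in> trel V W"
| addl: "\<lbrakk>v \<in> vcar V; v' \<in> vcar V; w \<in> vcar W\<rbrakk> \<Longrightarrow>
     (\<lambda>p. delta (vadd V v v', w) p - delta (v, w) p - delta (v', w) p) \<in> trel V W"
| addr: "\<lbrakk>v \<in> vcar V; w \<in> vcar W; w' \<in> vcar W\<rbrakk> \<Longrightarrow>
     (\<lambda>p. delta (v, vadd W w w') p - delta (v, w) p - delta (v, w') p) \<in> trel V W"
| scl: "\<lbrakk>v \<in> vcar V; w \<in> vcar W\<rbrakk> \<Longrightarrow>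
     (\<lambda>p. delta (vsc V c v, w) p - c * delta (v, w) p) \<in> trel V W"
| scr: "\<lbrakk>v \<in> vcar V; w \<in> vcar W\<rbrakk> \<Longrightarrow>
     (\<lambda>p. delta (v, vsc W c w) p - c * delta (v, w) p) \<in> trel V W"
| sum: "\<lbrakk>f \<in> trel V W; g \<in> trel V W\<rbrakk> \<Longrightarrow> (\<lambda>p. f p + g p) \<in> trel V W"
| smul: "f \<in> trel V W \<Longrightarrow> (\<lambda>p. c * f p) \<in> trel V W"

text \<open>A list of pairs represents the formal sum of its entries (scalars are absorbed into the first factor).\<close>
definition fsum :: "('a \<times> 'b) list \<Rightarrow> ('a \<times> 'b \<Rightarrow> 'k::field)" where
  "fsum xs = (\<lambda>p. of_nat (count_list xs p))"

definition teq :: "('k::field, 'a) vs \<Rightarrow> ('k, 'b) vs \<Rightarrow> ('a \<times> 'b) list \<Rightarrow> ('a \<times> 'b) list \<Rightarrow> bool" where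
  "teq V W xs ys \<longleftrightarrow> set xs \<subseteq> vcar V \<times> vcar W \<and> set ys \<subseteq> vcar V \<times> vcar W \<and>
     (\<lambda>p. (fsum xs p :: 'k) - fsum ys p) \<in> trel V W"

definition tclass :: "('k::field, 'a) vs \<Rightarrow> ('k, 'b) vs \<Rightarrow> ('a \<times> 'b) list \<Rightarrow> ('a \<times> 'b) list set" where
  "tclass V W xs = {ys. teq V W xs ys}"

definition trep :: "('a \<times> 'b) list set \<Rightarrow> ('a \<times> 'b) list" where
  "trep t = (SOME xs. xs \<in> t)"

definition tsp :: "('k::field, 'a) vs \<Rightarrow> ('k, 'b) vs \<Rightarrow> ('k, ('a \<times> 'b) list set) vs" where
  "tsp V W = \<lparr> vcar = {tclass V W xs | xs. set xs \<subseteq> vcar V \<times> vcar W},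
               vadd = (\<lambda>s t. tclass V W (trep s @ trep t)),
               vzero = tclass V W [],
               vsc = (\<lambda>c t. tclass V W (map (\<lambda>(v, w). (vsc V c v, w)) (trep t))) \<rparr>"

definition tens :: "('k::field, 'a) vs \<Rightarrow> ('k, 'b) vs \<Rightarrow> 'a \<Rightarrow> 'b \<Rightarrow> ('a \<times> 'b) list set" where
  "tens V W v w = tclass V W [(v, w)]"

definition tlift :: "('k, 'c) vs \<Rightarrow> ('a \<Rightarrow> 'b \<Rightarrow> 'c) \<Rightarrow> ('a \<times> 'b) list set \<Rightarrow> 'c" where
  "tlift U f t = foldr (\<lambda>(v, w) acc. vadd U (f v w) acc) (trep t) (vzero U)"

definition tmap :: "('k::field, 'c) vs \<Rightarrow> ('k, 'd) vs \<Rightarrow> ('a \<Rightarrow> 'c) \<Rightarrow> ('b \<Rightarrow> 'd)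
    \<Rightarrow> ('a \<times> 'b) list set \<Rightarrow> ('c \<times> 'd) list set" where
  "tmap V' W' f g t = tlift (tsp V' W') (\<lambda>v w. tens V' W' (f v) (g w)) t"

definition tassoc :: "('k::field, 'u) vs \<Rightarrow> ('k, 'v) vs \<Rightarrow> ('k, 'w) vs
    \<Rightarrow> ((('u \<times> 'v) list set) \<times> 'w) list set \<Rightarrow> ('u \<times> (('v \<times> 'w) list set)) list set" where
  "tassoc U V W t = tlift (tsp U (tsp V W))
     (\<lambda>x w. tlift (tsp U (tsp V W)) (\<lambda>u v. tens U (tsp V W) u (tens V W v w)) x) t"

definition tmul :: "('k::field, 'a) vs \<Rightarrow> ('k, 'b) vs \<Rightarrow> ('a \<Rightarrow> 'a \<Rightarrow> 'a) \<Rightarrow> ('b \<Rightarrow> 'b \<Rightarrow> 'b)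
    \<Rightarrow> ('a \<times> 'b) list set \<Rightarrow> ('a \<times> 'b) list set \<Rightarrow> ('a \<times> 'b) list set" where
  "tmul D E mu nu t t' = tlift (tsp D E)
     (\<lambda>d e. tlift (tsp D E) (\<lambda>d' e'. tens D E (mu d d') (nu e e')) t') t"

definition hom_assoc :: "('k::field, 'a) vs \<Rightarrow> ('a \<Rightarrow> 'a \<Rightarrow> 'a) \<Rightarrow> ('a \<Rightarrow> 'a) \<Rightarrow> bool" where
  "hom_assoc V mu al \<longleftrightarrow> is_vs V \<and> bilinear_map V V V mu \<and> linear_map V V al \<and>
     (\<forall>x\<in>vcar V. \<forall>y\<in>vcar V. al (mu x y) = mu (al x) (al y)) \<and>
     (\<forall>x\<in>vcar V. \<forall>y\<in>vcar V. \<forall>z\<in>vcar V. mu (al x) (mu y z) = mu (mu x y) (al z))"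

definition hom_alg_mor :: "('k::field, 'a) vs \<Rightarrow> ('a \<Rightarrow> 'a \<Rightarrow> 'a) \<Rightarrow> ('a \<Rightarrow> 'a)
    \<Rightarrow> ('k, 'b) vs \<Rightarrow> ('b \<Rightarrow> 'b \<Rightarrow> 'b) \<Rightarrow> ('b \<Rightarrow> 'b) \<Rightarrow> ('a \<Rightarrow> 'b) \<Rightarrow> bool" where
  "hom_alg_mor V mu al W mu' al' f \<longleftrightarrow> linear_map V W f \<and>
     (\<forall>x\<in>vcar V. al' (f x) = f (al x)) \<and>
     (\<forall>x\<in>vcar V. \<forall>y\<in>vcar V. f (mu x y) = mu' (f x) (f y))"

definition hom_bialg :: "('k::field, 'h) vs \<Rightarrow> ('h \<Rightarrow> 'h \<Rightarrow> 'h)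
    \<Rightarrow> ('h \<Rightarrow> ('h \<times> 'h) list set) \<Rightarrow> ('h \<Rightarrow> 'h) \<Rightarrow> bool" where
  "hom_bialg H mu De al \<longleftrightarrow> hom_assoc H mu al \<and> linear_map H (tsp H H) De \<and>
     (\<forall>h\<in>vcar H. tassoc H H H (tmap (tsp H H) H De al (De h)) = tmap H (tsp H H) al De (De h)) \<and>
     (\<forall>h\<in>vcar H. \<forall>h'\<in>vcar H. De (mu h h') = tmul H H mu mu (De h) (De h')) \<and>
     (\<forall>h\<in>vcar H. De (al h) = tmap H H al al (De h))"

definition module_hom_alg :: "('k::field, 'h) vs \<Rightarrow> ('h \<Rightarrow> 'h \<Rightarrow> 'h)
    \<Rightarrow> ('h \<Rightarrow> ('h \<times> 'h) list set) \<Rightarrow> ('h \<Rightarrow> 'h)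
    \<Rightarrow> ('k, 'a) vs \<Rightarrow> ('a \<Rightarrow> 'a \<Rightarrow> 'a) \<Rightarrow> ('a \<Rightarrow> 'a) \<Rightarrow> ('h \<Rightarrow> 'a \<Rightarrow> 'a) \<Rightarrow> bool" where
  "module_hom_alg H muH De alH A muA alA act \<longleftrightarrow> hom_assoc A muA alA \<and>
     bilinear_map H A A act \<and>
     (\<forall>h\<in>vcar H. \<forall>a\<in>vcar A. alA (act h a) = act (alH h) (alA a)) \<and>
     (\<forall>h\<in>vcar H. \<forall>h'\<in>vcar H. \<forall>a\<in>vcar A. act (alH h) (act h' a) = act (muH h h') (alA a)) \<and>
     (\<forall>h\<in>vcar H. \<forall>a\<in>vcar A. \<forall>a'\<in>vcar A.
        act (alH (alH h)) (muA a a') = tlift A (\<lambda>x y. muA (act x a) (act y a')) (De h))"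

definition comodule :: "('k::field, 'm) vs \<Rightarrow> ('m \<Rightarrow> 'm) \<Rightarrow> ('k, 'h) vs
    \<Rightarrow> ('h \<Rightarrow> ('h \<times> 'h) list set) \<Rightarrow> ('h \<Rightarrow> 'h) \<Rightarrow> ('m \<Rightarrow> ('m \<times> 'h) list set) \<Rightarrow> bool" where
  "comodule M alM H De alH rho \<longleftrightarrow> linear_map M (tsp M H) rho \<and>
     (\<forall>m\<in>vcar M. tmap M H alM alH (rho m) = rho (alM m)) \<and>
     (\<forall>m\<in>vcar M. tmap M (tsp H H) alM De (rho m) = tassoc M H H (tmap (tsp M H) H rho alH (rho m)))"

definition comodule_hom_alg :: "('k::field, 'd) vs \<Rightarrow> ('d \<Rightarrow> 'd \<Rightarrow> 'd) \<Rightarrow> ('d \<Rightarrow> 'd)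
    \<Rightarrow> ('k, 'h) vs \<Rightarrow> ('h \<Rightarrow> 'h \<Rightarrow> 'h) \<Rightarrow> ('h \<Rightarrow> ('h \<times> 'h) list set) \<Rightarrow> ('h \<Rightarrow> 'h)
    \<Rightarrow> ('d \<Rightarrow> ('d \<times> 'h) list set) \<Rightarrow> bool" where
  "comodule_hom_alg D muD alD H muH De alH rho \<longleftrightarrow> hom_assoc D muD alD \<and>
     comodule D alD H De alH rho \<and>
     hom_alg_mor D muD alD (tsp D H) (tmul D H muD muH) (tmap D H alD alH) rho"

definition smash_mult :: "('k::field, 'a) vs \<Rightarrow> ('k, 'h) vs \<Rightarrow> ('a \<Rightarrow> 'a \<Rightarrow> 'a) \<Rightarrow> ('a \<Rightarrow> 'a)
    \<Rightarrow> ('h \<Rightarrow> 'h \<Rightarrow> 'h) \<Rightarrow> ('h \<Rightarrow> ('h \<times> 'h) list set) \<Rightarrow> ('h \<Rightarrow> 'h) \<Rightarrow> ('h \<Rightarrow> 'a \<Rightarrow> 'a)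
    \<Rightarrow> ('a \<times> 'h) list set \<Rightarrow> ('a \<times> 'h) list set \<Rightarrow> ('a \<times> 'h) list set" where
  "smash_mult A H muA alA muH De alH act t t' =
     (let iA = the_inv_into (vcar A) alA; iH = the_inv_into (vcar H) alH in
      tlift (tsp A H) (\<lambda>a h. tlift (tsp A H) (\<lambda>a' h'.
        tlift (tsp A H) (\<lambda>x y. tens A H (muA a (act (iH (iH x)) (iA a'))) (muH (iH y) h')) (De h)) t') t)"

definition smash_rho :: "('k::field, 'a) vs \<Rightarrow> ('k, 'h) vs \<Rightarrow> ('a \<Rightarrow> 'a)
    \<Rightarrow> ('h \<Rightarrow> ('h \<times> 'h) list set) \<Rightarrow> ('a \<times> 'h) list set \<Rightarrow> ((('a \<times> 'h) list set) \<times> 'h) list set" where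
  "smash_rho A H alA De t = tlift (tsp (tsp A H) H)
     (\<lambda>a h. tlift (tsp (tsp A H) H) (\<lambda>x y. tens (tsp A H) H (tens A H (alA a) x) y) (De h)) t"

end

theory Submission
  imports Defs "HOL-Algebra.Ring"
begin

text \<open>Every map in sight is linear or multilinear, so each required identity only has to be checked
  on simple tensors \<open>a # h\<close>, where the product and the coaction are explicit Sweedler sums over
  \<open>\<Delta>\<close>. There, multiplicativity of \<open>\<Delta>\<close>, the Hom-module-algebra axioms and
  \<open>\<Delta> \<circ> \<alpha> = (\<alpha> \<otimes> \<alpha>) \<circ> \<Delta>\<close> bring both sides of Hom-associativity, of the
  Hom-coassociativity of \<open>\<rho>\<close> and of the multiplicativity of \<open>\<rho>\<close> into the shape
  \<open>\<Sum> G(h\<^sub>1\<^sub>1, h\<^sub>1\<^sub>2, \<alpha>(h\<^sub>2))\<close> resp. \<open>\<Sum> G(\<alpha>(h\<^sub>1), h\<^sub>2\<^sub>1, h\<^sub>2\<^sub>2)\<close>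
  for a trilinear \<open>G\<close>, and these agree by Hom-coassociativity of \<open>H\<close>. Lifting maps along the
  tensor product, which is a quotient of formal sums, is well defined because the free extension of a
  bilinear map kills the bilinearity relations.\<close>

section \<open>Vector spaces and linear maps\<close>

context fixes V :: "('k::field, 'a) vs" assumes V: "is_vs V"
begin

lemma vs_zero[simp]: "vzero V \<in> vcar V" using V by (simp add: is_vs_def)
lemma vs_add[simp]: "x \<in> vcar V \<Longrightarrow> y \<in> vcar V \<Longrightarrow> vadd V x y \<in> vcar V" using V by (simp add: is_vs_def)
lemma vs_sc[simp]: "x \<in> vcar V \<Longrightarrow> vsc V c x \<in> vcar V" using V by (simp add: is_vs_def)
lemma vs_assoc: "x \<in> vcar V \<Longrightarrow> y \<in> vcar V \<Longrightarrow> z \<in> vcar V \<Longrightarrow> vadd V (vadd V x y) z = vadd V x (vadd V y z)"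
  using V unfolding is_vs_def by blast
lemma vs_comm: "x \<in> vcar V \<Longrightarrow> y \<in> vcar V \<Longrightarrow> vadd V x y = vadd V y x"
  using V unfolding is_vs_def by blast
lemma vs_lzero[simp]: "x \<in> vcar V \<Longrightarrow> vadd V (vzero V) x = x" using V unfolding is_vs_def by blast
lemma vs_rzero[simp]: "x \<in> vcar V \<Longrightarrow> vadd V x (vzero V) = x" using vs_comm vs_lzero vs_zero by metis
lemma vs_sc_add: "x \<in> vcar V \<Longrightarrow> y \<in> vcar V \<Longrightarrow> vsc V c (vadd V x y) = vadd V (vsc V c x) (vsc V c y)"
  using V by (simp add: is_vs_def)
lemma vs_add_sc: "x \<in> vcar V \<Longrightarrow> vsc V (c + d) x = vadd V (vsc V c x) (vsc V d x)"
  using V by (simp add: is_vs_def)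
lemma vs_sc_sc: "x \<in> vcar V \<Longrightarrow> vsc V c (vsc V d x) = vsc V (c * d) x"
  using V by (simp add: is_vs_def)
lemma vs_one[simp]: "x \<in> vcar V \<Longrightarrow> vsc V 1 x = x"
  using V by (simp add: is_vs_def)
lemma vs_inv: "x \<in> vcar V \<Longrightarrow> \<exists>y\<in>vcar V. vadd V x y = vzero V"
  using V unfolding is_vs_def by blast

lemma vs_cancel:
  assumes x: "x \<in> vcar V" and y: "y \<in> vcar V" and z: "z \<in> vcar V" and e: "vadd V x y = vadd V x z"
  shows "y = z"
proof -
  obtain x' where x': "x' \<in> vcar V" "vadd V x x' = vzero V" using vs_inv[OF x] by blast
  have "y = vadd V (vadd V x' x) y" using x' x y vs_comm by simp
  also have "\<dots> = vadd V x' (vadd V x z)" using x x' y e vs_assoc by simp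
  also have "\<dots> = z" using x x' z vs_assoc vs_comm by (metis vs_lzero)
  finally show ?thesis .
qed

lemma vs_sc0[simp]: "x \<in> vcar V \<Longrightarrow> vsc V 0 x = vzero V"
  using vs_add_sc[of x 0 0] vs_cancel[of "vsc V 0 x" "vsc V 0 x" "vzero V"] by simp

lemma vs_sc_zero[simp]: "vsc V c (vzero V) = vzero V"
  using vs_sc_sc[of "vzero V" c 0] by simp

lemma vs_neg: "x \<in> vcar V \<Longrightarrow> vadd V x (vsc V (-1) x) = vzero V"
  using vs_add_sc[of x 1 "-1"] by simp

lemma vs_sc_neg_eq: "x \<in> vcar V \<Longrightarrow> y \<in> vcar V \<Longrightarrow> vadd V x (vsc V (-1) y) = vzero V \<Longrightarrow> x = y"
  by (metis vs_assoc vs_comm vs_lzero vs_neg vs_sc vs_rzero)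

lemma vs_add_interchange:
  assumes "a \<in> vcar V" "b \<in> vcar V" "c \<in> vcar V" "d \<in> vcar V"
  shows "vadd V (vadd V a b) (vadd V c d) = vadd V (vadd V a c) (vadd V b d)"
  using assms vs_assoc vs_comm vs_add by metis

end

lemma linD:
  assumes "linear_map V W f"
  shows "x \<in> vcar V \<Longrightarrow> f x \<in> vcar W"
    and "x \<in> vcar V \<Longrightarrow> y \<in> vcar V \<Longrightarrow> f (vadd V x y) = vadd W (f x) (f y)"
    and "x \<in> vcar V \<Longrightarrow> f (vsc V c x) = vsc W c (f x)"
  using assms unfolding linear_map_def by auto

lemma linI:
  assumes "\<And>x. x \<in> vcar V \<Longrightarrow> f x \<in> vcar W"
    and "\<And>x y. x \<in> vcar V \<Longrightarrow> y \<in> vcar V \<Longrightarrow> f (vadd V x y) = vadd W (f x) (f y)"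
    and "\<And>c x. x \<in> vcar V \<Longrightarrow> f (vsc V c x) = vsc W c (f x)"
  shows "linear_map V W f"
  using assms unfolding linear_map_def by auto

lemma lin_zero: "is_vs V \<Longrightarrow> is_vs W \<Longrightarrow> linear_map V W f \<Longrightarrow> f (vzero V) = vzero W"
  using linD(3)[of V W f "vzero V" 0] linD(1)[of V W f "vzero V"] by simp

lemma lin_id: "linear_map X X (\<lambda>x. x)"
  by (rule linI) auto

lemma lin_comp: "linear_map X Y g \<Longrightarrow> linear_map Y Z h \<Longrightarrow> linear_map X Z (\<lambda>x. h (g x))"
  unfolding linear_map_def by auto

lemma the_inv_into_linear:
  assumes V: "is_vs V" and f: "linear_map V V f" and b: "bij_betw f (vcar V) (vcar V)"
  shows "linear_map V V (the_inv_into (vcar V) f)"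
proof -
  let ?g = "the_inv_into (vcar V) f"
  have g: "x \<in> vcar V \<Longrightarrow> ?g x \<in> vcar V" for x using b by (metis bij_betw_def bij_betw_the_inv_into bij_betwE)
  have fg: "x \<in> vcar V \<Longrightarrow> f (?g x) = x" for x using b by (simp add: f_the_inv_into_f_bij_betw)
  have gf: "x \<in> vcar V \<Longrightarrow> ?g (f x) = x" for x using b by (simp add: bij_betw_def the_inv_into_f_f)
  show ?thesis
  proof (rule linI)
    fix x y assume x: "x \<in> vcar V" and y: "y \<in> vcar V"
    have "vadd V x y = f (vadd V (?g x) (?g y))" using linD(2)[OF f g[OF x] g[OF y]] fg x y by simp
    thus "?g (vadd V x y) = vadd V (?g x) (?g y)" using gf g x y vs_add[OF V] by metis
  next
    fix c x assume x: "x \<in> vcar V"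
    have "vsc V c x = f (vsc V c (?g x))" using linD(3)[OF f g[OF x]] fg x by simp
    thus "?g (vsc V c x) = vsc V c (?g x)" using gf g x vs_sc[OF V] by metis
  qed (rule g)
qed

lemma bilD:
  assumes "bilinear_map V W U f"
  shows "v \<in> vcar V \<Longrightarrow> w \<in> vcar W \<Longrightarrow> f v w \<in> vcar U"
    and "v \<in> vcar V \<Longrightarrow> v' \<in> vcar V \<Longrightarrow> w \<in> vcar W \<Longrightarrow> f (vadd V v v') w = vadd U (f v w) (f v' w)"
    and "v \<in> vcar V \<Longrightarrow> w \<in> vcar W \<Longrightarrow> w' \<in> vcar W \<Longrightarrow> f v (vadd W w w') = vadd U (f v w) (f v w')"
    and "v \<in> vcar V \<Longrightarrow> w \<in> vcar W \<Longrightarrow> f (vsc V c v) w = vsc U c (f v w)"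
    and "v \<in> vcar V \<Longrightarrow> w \<in> vcar W \<Longrightarrow> f v (vsc W c w) = vsc U c (f v w)"
  using assms unfolding bilinear_map_def linear_map_def by auto

lemma bilI:
  assumes "\<And>w. w \<in> vcar W \<Longrightarrow> linear_map V U (\<lambda>v. f v w)"
    and "\<And>v. v \<in> vcar V \<Longrightarrow> linear_map W U (\<lambda>w. f v w)"
  shows "bilinear_map V W U f"
  using assms unfolding bilinear_map_def by auto

lemma bil_lin1: "bilinear_map V W U f \<Longrightarrow> w \<in> vcar W \<Longrightarrow> linear_map V U (\<lambda>v. f v w)"
  unfolding bilinear_map_def by auto

lemma bil_lin2: "bilinear_map V W U f \<Longrightarrow> v \<in> vcar V \<Longrightarrow> linear_map W U (\<lambda>w. f v w)"
  unfolding bilinear_map_def by auto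

lemma lin_bil_comp1:
  "bilinear_map V W U f \<Longrightarrow> linear_map X V F \<Longrightarrow> w \<in> vcar W \<Longrightarrow> linear_map X U (\<lambda>x. f (F x) w)"
  by (rule lin_comp[OF _ bil_lin1])

lemma lin_bil_comp2:
  "bilinear_map V W U f \<Longrightarrow> v \<in> vcar V \<Longrightarrow> linear_map X W G \<Longrightarrow> linear_map X U (\<lambda>x. f v (G x))"
  by (rule lin_comp[OF _ bil_lin2])

definition trilinear_map ::
  "('k::field, 'a) vs \<Rightarrow> ('k, 'b) vs \<Rightarrow> ('k, 'c) vs \<Rightarrow> ('k, 'd) vs \<Rightarrow> ('a \<Rightarrow> 'b \<Rightarrow> 'c \<Rightarrow> 'd) \<Rightarrow> bool" where
  "trilinear_map V1 V2 V3 U G \<longleftrightarrow>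
     (\<forall>y\<in>vcar V2. \<forall>z\<in>vcar V3. linear_map V1 U (\<lambda>x. G x y z)) \<and>
     (\<forall>x\<in>vcar V1. \<forall>z\<in>vcar V3. linear_map V2 U (\<lambda>y. G x y z)) \<and>
     (\<forall>x\<in>vcar V1. \<forall>y\<in>vcar V2. linear_map V3 U (\<lambda>z. G x y z))"

lemma trilinearI:
  assumes "\<And>y z. y \<in> vcar V2 \<Longrightarrow> z \<in> vcar V3 \<Longrightarrow> linear_map V1 U (\<lambda>x. G x y z)"
    and "\<And>x z. x \<in> vcar V1 \<Longrightarrow> z \<in> vcar V3 \<Longrightarrow> linear_map V2 U (\<lambda>y. G x y z)"
    and "\<And>x y. x \<in> vcar V1 \<Longrightarrow> y \<in> vcar V2 \<Longrightarrow> linear_map V3 U (\<lambda>z. G x y z)"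
  shows "trilinear_map V1 V2 V3 U G"
  using assms unfolding trilinear_map_def by blast

lemma trilinear_bil12: "trilinear_map V1 V2 V3 U G \<Longrightarrow> z \<in> vcar V3 \<Longrightarrow> bilinear_map V1 V2 U (\<lambda>x y. G x y z)"
  unfolding trilinear_map_def by (auto intro: bilI)

lemma trilinear_bil23: "trilinear_map V1 V2 V3 U G \<Longrightarrow> x \<in> vcar V1 \<Longrightarrow> bilinear_map V2 V3 U (G x)"
  unfolding trilinear_map_def by (auto intro: bilI)

lemma trilinear_lin1: "trilinear_map V1 V2 V3 U G \<Longrightarrow> y \<in> vcar V2 \<Longrightarrow> z \<in> vcar V3 \<Longrightarrow> linear_map V1 U (\<lambda>x. G x y z)"
  unfolding trilinear_map_def by blast

lemma trilinear_lin3: "trilinear_map V1 V2 V3 U G \<Longrightarrow> x \<in> vcar V1 \<Longrightarrow> y \<in> vcar V2 \<Longrightarrow> linear_map V3 U (\<lambda>z. G x y z)"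
  unfolding trilinear_map_def by blast

definition lsum :: "('k::field, 'c) vs \<Rightarrow> ('a \<Rightarrow> 'b \<Rightarrow> 'c) \<Rightarrow> ('a \<times> 'b) list \<Rightarrow> 'c" where
  "lsum U f xs = foldr (\<lambda>(v, w) acc. vadd U (f v w) acc) xs (vzero U)"

lemma lsum_simps[simp]:
  "lsum U f [] = vzero U" "lsum U f (x # xs) = vadd U (f (fst x) (snd x)) (lsum U f xs)"
  by (simp_all add: lsum_def split: prod.split)

lemma lsum_cong: "(\<And>v w. (v, w) \<in> set xs \<Longrightarrow> F v w = G v w) \<Longrightarrow> lsum U F xs = lsum U G xs"
proof (induction xs)
  case (Cons x xs)
  then show ?case by (cases x) auto
qed simp

context fixes V :: "('k::field, 'a) vs" and W :: "('k, 'b) vs" and U :: "('k, 'c) vs"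
  assumes U: "is_vs U"
begin

lemma lsum_closed:
  "set xs \<subseteq> vcar V \<times> vcar W \<Longrightarrow> (\<And>v w. v \<in> vcar V \<Longrightarrow> w \<in> vcar W \<Longrightarrow> F v w \<in> vcar U)
   \<Longrightarrow> lsum U F xs \<in> vcar U"
proof (induction xs)
  case (Cons x xs)
  then show ?case using U by (cases x) auto
qed (simp add: U)

lemma lsum_append:
  assumes "set xs \<subseteq> vcar V \<times> vcar W" "set ys \<subseteq> vcar V \<times> vcar W"
    and "\<And>v w. v \<in> vcar V \<Longrightarrow> w \<in> vcar W \<Longrightarrow> F v w \<in> vcar U"
  shows "lsum U F (xs @ ys) = vadd U (lsum U F xs) (lsum U F ys)"
  using assms
proof (induction xs)
  case Nil
  then show ?case using lsum_closed[of ys F] U by simp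
next
  case (Cons x xs)
  then show ?case using lsum_closed[of ys F] lsum_closed[of xs F] U vs_assoc[OF U]
    by (cases x) auto
qed

lemma lsum_add_fun:
  "set xs \<subseteq> vcar V \<times> vcar W \<Longrightarrow> (\<And>v w. v \<in> vcar V \<Longrightarrow> w \<in> vcar W \<Longrightarrow> F v w \<in> vcar U)
   \<Longrightarrow> (\<And>v w. v \<in> vcar V \<Longrightarrow> w \<in> vcar W \<Longrightarrow> G v w \<in> vcar U)
   \<Longrightarrow> lsum U (\<lambda>v w. vadd U (F v w) (G v w)) xs = vadd U (lsum U F xs) (lsum U G xs)"
proof (induction xs)
  case (Cons x xs)
  then show ?case using lsum_closed[of xs F] lsum_closed[of xs G] vs_add_interchange[OF U]
    by (cases x) auto
qed (simp add: U)

lemma lsum_sc_fun: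
  "set xs \<subseteq> vcar V \<times> vcar W \<Longrightarrow> (\<And>v w. v \<in> vcar V \<Longrightarrow> w \<in> vcar W \<Longrightarrow> F v w \<in> vcar U)
   \<Longrightarrow> lsum U (\<lambda>v w. vsc U c (F v w)) xs = vsc U c (lsum U F xs)"
proof (induction xs)
  case (Cons x xs)
  then show ?case using lsum_closed[of xs F] vs_sc_add[OF U] by (cases x) auto
qed (simp add: U)

lemma lsum_map:
  assumes U': "is_vs U'" and L: "linear_map U U' L"
  shows "set xs \<subseteq> vcar V \<times> vcar W \<Longrightarrow> (\<And>v w. v \<in> vcar V \<Longrightarrow> w \<in> vcar W \<Longrightarrow> F v w \<in> vcar U)
   \<Longrightarrow> L (lsum U F xs) = lsum U' (\<lambda>v w. L (F v w)) xs"
proof (induction xs)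
  case Nil
  then show ?case using lin_zero[OF U U' L] by simp
next
  case (Cons x xs)
  then show ?case using lsum_closed[of xs F] linD(2)[OF L] by (cases x) auto
qed

end

lemma lsum_swap:
  fixes V :: "('k::field, 'a) vs" and W :: "('k, 'b) vs" and U :: "('k, 'c) vs"
    and V' :: "('k, 'd) vs" and W' :: "('k, 'e) vs"
  assumes U: "is_vs U" and ys: "set ys \<subseteq> vcar V' \<times> vcar W'"
    and F: "\<And>v w v' w'. v \<in> vcar V \<Longrightarrow> w \<in> vcar W \<Longrightarrow> v' \<in> vcar V' \<Longrightarrow> w' \<in> vcar W' \<Longrightarrow> F v w v' w' \<in> vcar U"
  shows "set xs \<subseteq> vcar V \<times> vcar W \<Longrightarrow>
    lsum U (\<lambda>v w. lsum U (\<lambda>v' w'. F v w v' w') ys) xs = lsum U (\<lambda>v' w'. lsum U (\<lambda>v w. F v w v' w') xs) ys"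
proof (induction xs)
  case Nil
  have "lsum U (\<lambda>v' w'. vzero U) ys = vzero U" by (induction ys) (auto simp: U)
  then show ?case by simp
next
  case (Cons x xs)
  obtain v w where x: "x = (v, w)" by (cases x)
  have c: "v \<in> vcar V" "w \<in> vcar W" and xs: "set xs \<subseteq> vcar V \<times> vcar W" using Cons x by auto
  have "lsum U (\<lambda>v' w'. lsum U (\<lambda>v w. F v w v' w') (x # xs)) ys
     = lsum U (\<lambda>v' w'. vadd U (F v w v' w') (lsum U (\<lambda>v w. F v w v' w') xs)) ys"
    using x by simp
  also have "\<dots> = vadd U (lsum U (\<lambda>v' w'. F v w v' w') ys) (lsum U (\<lambda>v' w'. lsum U (\<lambda>v w. F v w v' w') xs) ys)"
    by (rule lsum_add_fun[OF U ys]) (use F c lsum_closed[OF U xs] in auto)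
  finally show ?case using Cons xs x by simp
qed

section \<open>Bilinear maps respect the tensor relations\<close>

text \<open>A bilinear \<open>f\<close> is extended to the free vector space on pairs by sending a finitely supported
  \<open>\<phi>\<close> to \<open>\<Sum>\<^sub>p \<phi> p \<cdot> f p\<close>. The sum is HOL-Algebra's \<open>finsum\<close>, for which the additive
  group of a vector space is packaged as a ring record whose multiplicative part is a dummy.\<close>

definition vs_group :: "('k::field, 'a) vs \<Rightarrow> 'a ring" where
  "vs_group V = \<lparr>carrier = vcar V, mult = (\<lambda>x y. x), one = vzero V, zero = vzero V, add = vadd V\<rparr>"

lemma vs_group_simps[simp]: "carrier (vs_group V) = vcar V" "add (vs_group V) = vadd V" "zero (vs_group V) = vzero V"
  by (simp_all add: vs_group_def)

lemma abelian_group_vs_group: "is_vs V \<Longrightarrow> abelian_group (vs_group V)"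
  by (rule abelian_groupI) (simp_all add: vs_assoc, simp add: vs_comm, metis vs_neg vs_comm vs_sc)

definition supp :: "('x \<Rightarrow> 'k::field) \<Rightarrow> 'x set" where
  "supp \<phi> = {p. \<phi> p \<noteq> 0}"

definition weighted :: "('k::field, 'c) vs \<Rightarrow> ('a \<Rightarrow> 'b \<Rightarrow> 'c) \<Rightarrow> ('a \<times> 'b \<Rightarrow> 'k) \<Rightarrow> 'a \<times> 'b \<Rightarrow> 'c" where
  "weighted U f \<phi> p = vsc U (\<phi> p) (f (fst p) (snd p))"

definition annihilates ::
  "('k::field, 'a) vs \<Rightarrow> ('k, 'b) vs \<Rightarrow> ('k, 'c) vs \<Rightarrow> ('a \<Rightarrow> 'b \<Rightarrow> 'c) \<Rightarrow> ('a \<times> 'b \<Rightarrow> 'k) \<Rightarrow> bool" where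
  "annihilates V W U f \<phi> \<longleftrightarrow> (\<exists>P. finite P \<and> P \<subseteq> vcar V \<times> vcar W \<and> supp \<phi> \<subseteq> P \<and>
     finsum (vs_group U) (weighted U f \<phi>) P = vzero U)"

context
  fixes V :: "('k::field, 'a) vs" and W :: "('k, 'b) vs" and U :: "('k, 'c) vs" and f
  assumes V: "is_vs V" and W: "is_vs W" and U: "is_vs U" and f: "bilinear_map V W U f"
begin

interpretation U: abelian_group "vs_group U" by (rule abelian_group_vs_group[OF U])

lemmas U_simps[simp] = vs_sc[OF U] vs_add[OF U] vs_zero[OF U] vs_sc0[OF U] vs_sc_zero[OF U] vs_one[OF U]
  vs_lzero[OF U] vs_rzero[OF U] bilD(1)[OF f]

lemma weighted_Pi: "Q \<subseteq> vcar V \<times> vcar W \<Longrightarrow> weighted U f \<phi> \<in> Q \<rightarrow> carrier (vs_group U)"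
  by (auto simp: weighted_def)

lemma finsum_weighted_supp:
  assumes Q: "finite Q" "Q \<subseteq> vcar V \<times> vcar W" and P: "supp \<phi> \<subseteq> P" "P \<subseteq> Q"
  shows "finsum (vs_group U) (weighted U f \<phi>) Q = finsum (vs_group U) (weighted U f \<phi>) P"
proof -
  have "finsum (vs_group U) (weighted U f \<phi>) (Q - P) = finsum (vs_group U) (\<lambda>_. zero (vs_group U)) (Q - P)"
  proof (rule U.finsum_cong')
    fix p assume p: "p \<in> Q - P"
    then have "\<phi> p = 0" using P by (auto simp: supp_def)
    moreover have "fst p \<in> vcar V" "snd p \<in> vcar W" using p Q by auto
    ultimately show "weighted U f \<phi> p = zero (vs_group U)" by (simp add: weighted_def)
  qed simp_all
  then have zero: "finsum (vs_group U) (weighted U f \<phi>) (Q - P) = vzero U" using U.finsum_zero by simp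
  have PQ: "finite P" "P \<subseteq> vcar V \<times> vcar W" "Q - P \<subseteq> vcar V \<times> vcar W"
    using Q P finite_subset by auto
  have "finsum (vs_group U) (weighted U f \<phi>) (P \<union> (Q - P))
      = add (vs_group U) (finsum (vs_group U) (weighted U f \<phi>) P) (finsum (vs_group U) (weighted U f \<phi>) (Q - P))"
    by (rule U.finsum_Un_disjoint) (use Q PQ weighted_Pi in auto)
  moreover have "P \<union> (Q - P) = Q" using P by blast
  ultimately show ?thesis using zero U.finsum_closed[OF weighted_Pi[OF PQ(2)]] by simp
qed

lemma finsum_weighted_add:
  assumes "finite Q" "Q \<subseteq> vcar V \<times> vcar W"
  shows "finsum (vs_group U) (weighted U f (\<lambda>p. \<phi> p + \<psi> p)) Q
       = vadd U (finsum (vs_group U) (weighted U f \<phi>) Q) (finsum (vs_group U) (weighted U f \<psi>) Q)"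
proof -
  have "finsum (vs_group U) (weighted U f (\<lambda>p. \<phi> p + \<psi> p)) Q
      = finsum (vs_group U) (\<lambda>p. add (vs_group U) (weighted U f \<phi> p) (weighted U f \<psi> p)) Q"
    by (rule U.finsum_cong') (use assms vs_add_sc[OF U] in \<open>auto simp: weighted_def\<close>)
  also have "\<dots> = add (vs_group U) (finsum (vs_group U) (weighted U f \<phi>) Q) (finsum (vs_group U) (weighted U f \<psi>) Q)"
    by (rule U.finsum_addf) (use weighted_Pi[OF assms(2)] in auto)
  finally show ?thesis by simp
qed

lemma finsum_weighted_scale:
  assumes "finite Q" "Q \<subseteq> vcar V \<times> vcar W"
  shows "finsum (vs_group U) (weighted U f (\<lambda>p. c * \<phi> p)) Q = vsc U c (finsum (vs_group U) (weighted U f \<phi>) Q)"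
  using assms
proof (induction Q rule: finite_induct)
  case (insert x F)
  have x: "x \<in> vcar V \<times> vcar W" and F: "F \<subseteq> vcar V \<times> vcar W" using insert by auto
  have "weighted U f (\<lambda>p. c * \<phi> p) x = vsc U c (weighted U f \<phi> x)"
    using x by (auto simp: weighted_def vs_sc_sc[OF U] mult.commute)
  moreover have "weighted U f \<phi> x \<in> vcar U" using x by (auto simp: weighted_def)
  ultimately show ?case
    using insert weighted_Pi[OF F] weighted_Pi[of "{x}"] x U.finsum_closed[OF weighted_Pi[OF F]]
    by (simp add: vs_sc_add[OF U])
qed simp

lemma finsum_weighted_delta:
  assumes "finite Q" "Q \<subseteq> vcar V \<times> vcar W" "q \<in> Q"
  shows "finsum (vs_group U) (weighted U f (delta q)) Q = f (fst q) (snd q)"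
proof -
  have "finsum (vs_group U) (weighted U f (delta q)) Q = finsum (vs_group U) (weighted U f (delta q)) {q}"
    by (rule finsum_weighted_supp) (use assms in \<open>auto simp: supp_def delta_def\<close>)
  also have "\<dots> = f (fst q) (snd q)"
    using assms weighted_Pi[of "{q}"] by (auto simp: weighted_def delta_def)
  finally show ?thesis .
qed

lemma finsum_weighted_fsum:
  assumes "finite Q" "Q \<subseteq> vcar V \<times> vcar W" "set xs \<subseteq> Q"
  shows "finsum (vs_group U) (weighted U f (fsum xs)) Q = lsum U f xs"
  using assms(3)
proof (induction xs)
  case Nil
  have "finsum (vs_group U) (weighted U f (fsum [])) Q = finsum (vs_group U) (\<lambda>_. zero (vs_group U)) Q"
    by (rule U.finsum_cong') (use assms in \<open>auto simp: weighted_def fsum_def\<close>)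
  then show ?case using U.finsum_zero by simp
next
  case (Cons x xs)
  have e: "fsum (x # xs) = (\<lambda>p. delta x p + fsum xs p)"
    by (auto simp: fsum_def delta_def)
  show ?case unfolding e using Cons finsum_weighted_add[OF assms(1,2)] finsum_weighted_delta[OF assms(1,2)] by simp
qed

lemma annihilates_add: "annihilates V W U f \<phi> \<Longrightarrow> annihilates V W U f \<psi> \<Longrightarrow> annihilates V W U f (\<lambda>p. \<phi> p + \<psi> p)"
proof -
  assume "annihilates V W U f \<phi>" "annihilates V W U f \<psi>"
  then obtain P1 P2 where P: "finite P1" "P1 \<subseteq> vcar V \<times> vcar W" "supp \<phi> \<subseteq> P1"
      "finsum (vs_group U) (weighted U f \<phi>) P1 = vzero U"
      "finite P2" "P2 \<subseteq> vcar V \<times> vcar W" "supp \<psi> \<subseteq> P2" "finsum (vs_group U) (weighted U f \<psi>) P2 = vzero U"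
    unfolding annihilates_def by blast
  have Q: "finite (P1 \<union> P2)" "P1 \<union> P2 \<subseteq> vcar V \<times> vcar W" using P by auto
  have "finsum (vs_group U) (weighted U f (\<lambda>p. \<phi> p + \<psi> p)) (P1 \<union> P2) = vzero U"
    using finsum_weighted_add[OF Q] finsum_weighted_supp[OF Q, of \<phi> P1] finsum_weighted_supp[OF Q, of \<psi> P2] P
    by simp
  moreover have "supp (\<lambda>p. \<phi> p + \<psi> p) \<subseteq> P1 \<union> P2" using P by (force simp: supp_def)
  ultimately show ?thesis unfolding annihilates_def using Q by blast
qed

lemma annihilates_scale: "annihilates V W U f \<phi> \<Longrightarrow> annihilates V W U f (\<lambda>p. c * \<phi> p)"
proof -
  assume "annihilates V W U f \<phi>"
  then obtain P where P: "finite P" "P \<subseteq> vcar V \<times> vcar W" "supp \<phi> \<subseteq> P"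
      "finsum (vs_group U) (weighted U f \<phi>) P = vzero U"
    unfolding annihilates_def by blast
  moreover have "supp (\<lambda>p. c * \<phi> p) \<subseteq> P" using P(3) by (auto simp: supp_def)
  ultimately show ?thesis unfolding annihilates_def using finsum_weighted_scale[OF P(1,2)] by auto
qed

lemma annihilates_three:
  assumes "a \<in> vcar V \<times> vcar W" "b \<in> vcar V \<times> vcar W" "c \<in> vcar V \<times> vcar W"
    and "vadd U (vsc U x (f (fst a) (snd a))) (vadd U (vsc U y (f (fst b) (snd b))) (vsc U z (f (fst c) (snd c)))) = vzero U"
  shows "annihilates V W U f (\<lambda>p. x * delta a p + y * delta b p + z * delta c p)"
proof -
  let ?P = "{a, b, c}"
  have P: "finite ?P" "?P \<subseteq> vcar V \<times> vcar W" using assms by auto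
  have "finsum (vs_group U) (weighted U f (\<lambda>p. x * delta a p + (y * delta b p + z * delta c p))) ?P = vzero U"
    using assms finsum_weighted_add[OF P] finsum_weighted_scale[OF P] finsum_weighted_delta[OF P] by simp
  then show ?thesis
    unfolding annihilates_def using P by (intro exI[of _ ?P]) (auto simp: supp_def delta_def add.assoc)
qed

lemma trel_annihilated: "\<phi> \<in> trel V W \<Longrightarrow> annihilates V W U f \<phi>"
proof (induction rule: trel.induct)
  case zero
  show ?case unfolding annihilates_def by (rule exI[of _ "{}"]) (simp add: supp_def)
next
  case (addl v v' w)
  have "f (vadd V v v') w = vadd U (f v w) (f v' w)" by (rule bilD(2)[OF f]) (use addl in auto)
  then have "vadd U (vsc U 1 (f (vadd V v v') w)) (vadd U (vsc U (-1) (f v w)) (vsc U (-1) (f v' w))) = vzero U"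
    using addl vs_neg[OF U] vs_sc_add[OF U, of "f v w" "f v' w" "-1", symmetric] by simp
  then have "annihilates V W U f (\<lambda>p. 1 * delta (vadd V v v', w) p + (-1) * delta (v, w) p + (-1) * delta (v', w) p)"
    using addl by (intro annihilates_three) (simp_all add: V)
  then show ?case by simp
next
  case (addr v w w')
  have "f v (vadd W w w') = vadd U (f v w) (f v w')" by (rule bilD(3)[OF f]) (use addr in auto)
  then have "vadd U (vsc U 1 (f v (vadd W w w'))) (vadd U (vsc U (-1) (f v w)) (vsc U (-1) (f v w'))) = vzero U"
    using addr vs_neg[OF U] vs_sc_add[OF U, of "f v w" "f v w'" "-1", symmetric] by simp
  then have "annihilates V W U f (\<lambda>p. 1 * delta (v, vadd W w w') p + (-1) * delta (v, w) p + (-1) * delta (v, w') p)"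
    using addr by (intro annihilates_three) (simp_all add: W)
  then show ?case by simp
next
  case (scl v w c)
  have "vadd U (vsc U 1 (f (vsc V c v) w)) (vadd U (vsc U (-c) (f v w)) (vsc U 0 (f v w))) = vzero U"
    using scl bilD(4)[OF f] vs_add_sc[OF U, symmetric, of "f v w" c "-c"] by simp
  then have "annihilates V W U f (\<lambda>p. 1 * delta (vsc V c v, w) p + (-c) * delta (v, w) p + 0 * delta (v, w) p)"
    using scl by (intro annihilates_three) (simp_all add: V)
  then show ?case by simp
next
  case (scr v w c)
  have "vadd U (vsc U 1 (f v (vsc W c w))) (vadd U (vsc U (-c) (f v w)) (vsc U 0 (f v w))) = vzero U"
    using scr bilD(5)[OF f] vs_add_sc[OF U, symmetric, of "f v w" c "-c"] by simp
  then have "annihilates V W U f (\<lambda>p. 1 * delta (v, vsc W c w) p + (-c) * delta (v, w) p + 0 * delta (v, w) p)"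
    using scr by (intro annihilates_three) (simp_all add: W)
  then show ?case by simp
qed (auto intro: annihilates_add annihilates_scale)

lemma lsum_teq:
  assumes "teq V W xs ys"
  shows "lsum U f xs = lsum U f ys"
proof -
  let ?\<phi> = "\<lambda>p. fsum xs p + (-1) * fsum ys p :: 'k"
  have xs: "set xs \<subseteq> vcar V \<times> vcar W" and ys: "set ys \<subseteq> vcar V \<times> vcar W"
    and "(\<lambda>p. fsum xs p - fsum ys p :: 'k) \<in> trel V W" using assms unfolding teq_def by blast+
  then have "annihilates V W U f ?\<phi>" using trel_annihilated by simp
  then obtain P where P: "finite P" "P \<subseteq> vcar V \<times> vcar W" "supp ?\<phi> \<subseteq> P"
      "finsum (vs_group U) (weighted U f ?\<phi>) P = vzero U"
    unfolding annihilates_def by blast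
  let ?Q = "P \<union> set xs \<union> set ys"
  have Q: "finite ?Q" "?Q \<subseteq> vcar V \<times> vcar W" using P xs ys by auto
  have "vzero U = finsum (vs_group U) (weighted U f ?\<phi>) ?Q"
    using finsum_weighted_supp[OF Q P(3)] P(4) by (simp add: sup_assoc)
  also have "\<dots> = vadd U (finsum (vs_group U) (weighted U f (fsum xs)) ?Q)
      (vsc U (-1) (finsum (vs_group U) (weighted U f (fsum ys)) ?Q))"
    unfolding finsum_weighted_add[OF Q] finsum_weighted_scale[OF Q] ..
  also have "\<dots> = vadd U (lsum U f xs) (vsc U (-1) (lsum U f ys))"
    by (simp add: finsum_weighted_fsum[OF Q Un_upper2[THEN subset_trans[OF _ Un_upper1]]]
        finsum_weighted_fsum[OF Q Un_upper2])
  finally have "vadd U (lsum U f xs) (vsc U (-1) (lsum U f ys)) = vzero U" by (rule sym)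
  moreover have "lsum U f xs \<in> vcar U" "lsum U f ys \<in> vcar U"
    by (rule lsum_closed[OF U xs], simp) (rule lsum_closed[OF U ys], simp)
  ultimately show ?thesis using vs_sc_neg_eq[OF U] by blast
qed

end

section \<open>The tensor product space\<close>

definition scmap :: "('k::field, 'a) vs \<Rightarrow> 'k \<Rightarrow> ('a \<times> 'b) list \<Rightarrow> ('a \<times> 'b) list" where
  "scmap V c xs = map (\<lambda>(v, w). (vsc V c v, w)) xs"

lemma fsum_Nil: "fsum [] = (\<lambda>p. 0)" by (simp add: fsum_def)
lemma fsum_Cons: "fsum (x # xs) = (\<lambda>p. delta x p + fsum xs p)"
  by (auto simp: fsum_def delta_def)
lemma fsum_append: "fsum (xs @ ys) = (\<lambda>p. fsum xs p + fsum ys p)"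
  by (auto simp: fsum_def)

lemma trel_lin: "\<phi> \<in> trel V W \<Longrightarrow> \<psi> \<in> trel V W \<Longrightarrow> (\<lambda>p. a * \<phi> p + b * \<psi> p) \<in> trel V W"
  by (intro trel.sum trel.smul)

lemma trel_lin_eq: "\<phi> \<in> trel V W \<Longrightarrow> \<psi> \<in> trel V W \<Longrightarrow> (\<And>p. \<chi> p = a * \<phi> p + b * \<psi> p) \<Longrightarrow> \<chi> \<in> trel V W"
  using trel_lin[of \<phi> V W \<psi> a b] by (metis (no_types, lifting) ext)

lemma trel_zeroI: "(\<And>p. \<chi> p = 0) \<Longrightarrow> \<chi> \<in> trel V W"
  using trel.zero[of V W] by (metis (no_types, lifting) ext)

context fixes V :: "('k::field, 'a) vs" and W :: "('k, 'b) vs"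
  assumes V: "is_vs V" and W: "is_vs W"
begin

lemmas V_W_simps[simp] = vs_sc[OF V] vs_add[OF V] vs_zero[OF V] vs_sc[OF W] vs_add[OF W] vs_zero[OF W]

lemma teq_refl: "set xs \<subseteq> vcar V \<times> vcar W \<Longrightarrow> teq V W xs xs"
  unfolding teq_def by (simp add: trel_zeroI)

lemma teq_sym: "teq V W xs ys \<Longrightarrow> teq V W ys xs"
proof -
  assume "teq V W xs ys"
  then have a: "set xs \<subseteq> vcar V \<times> vcar W" "set ys \<subseteq> vcar V \<times> vcar W"
    "(\<lambda>p. fsum xs p - fsum ys p :: 'k) \<in> trel V W" unfolding teq_def by auto
  have "(\<lambda>p. fsum ys p - fsum xs p :: 'k) \<in> trel V W"
    by (rule trel_lin_eq[OF a(3) a(3), where a="-1" and b=0]) simp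
  then show ?thesis using a unfolding teq_def by auto
qed

lemma teq_trans: "teq V W xs ys \<Longrightarrow> teq V W ys zs \<Longrightarrow> teq V W xs zs"
proof -
  assume "teq V W xs ys" "teq V W ys zs"
  then have a: "set xs \<subseteq> vcar V \<times> vcar W" "set zs \<subseteq> vcar V \<times> vcar W"
    "(\<lambda>p. fsum xs p - fsum ys p :: 'k) \<in> trel V W" "(\<lambda>p. fsum ys p - fsum zs p :: 'k) \<in> trel V W"
    unfolding teq_def by auto
  have "(\<lambda>p. fsum xs p - fsum zs p :: 'k) \<in> trel V W"
    by (rule trel_lin_eq[OF a(3) a(4), where a=1 and b=1]) simp
  then show ?thesis using a unfolding teq_def by auto
qed

lemma tclass_eq: "teq V W xs ys \<Longrightarrow> tclass V W xs = tclass V W ys"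
  unfolding tclass_def
proof (rule Collect_cong)
  fix zs assume t: "teq V W xs ys"
  show "teq V W xs zs = teq V W ys zs"
    using teq_trans[OF teq_sym[OF t], of zs] teq_trans[OF t, of zs] by (rule iffI)
qed

lemma trep_class:
  assumes "set xs \<subseteq> vcar V \<times> vcar W"
  shows "teq V W xs (trep (tclass V W xs))" "set (trep (tclass V W xs)) \<subseteq> vcar V \<times> vcar W"
    "tclass V W (trep (tclass V W xs)) = tclass V W xs"
proof -
  have "xs \<in> tclass V W xs" using teq_refl[OF assms] by (simp add: tclass_def)
  hence "trep (tclass V W xs) \<in> tclass V W xs" unfolding trep_def by (rule someI)
  thus t: "teq V W xs (trep (tclass V W xs))" by (simp add: tclass_def)
  thus "set (trep (tclass V W xs)) \<subseteq> vcar V \<times> vcar W" by (simp add: teq_def)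
  show "tclass V W (trep (tclass V W xs)) = tclass V W xs" using tclass_eq[OF t] by simp
qed

lemma teq_append: "teq V W xs xs' \<Longrightarrow> teq V W ys ys' \<Longrightarrow> teq V W (xs @ ys) (xs' @ ys')"
proof -
  assume "teq V W xs xs'" "teq V W ys ys'"
  then have a: "set (xs @ ys) \<subseteq> vcar V \<times> vcar W" "set (xs' @ ys') \<subseteq> vcar V \<times> vcar W"
    "(\<lambda>p. fsum xs p - fsum xs' p :: 'k) \<in> trel V W" "(\<lambda>p. fsum ys p - fsum ys' p :: 'k) \<in> trel V W"
    unfolding teq_def by auto
  have "(\<lambda>p. fsum (xs @ ys) p - fsum (xs' @ ys') p :: 'k) \<in> trel V W"
    by (rule trel_lin_eq[OF a(3) a(4), where a=1 and b=1]) (simp add: fsum_append)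
  then show ?thesis using a unfolding teq_def by auto
qed

lemma fsum_scmap: "set xs \<subseteq> vcar V \<times> vcar W \<Longrightarrow> (\<lambda>p. fsum (scmap V c xs) p - c * fsum xs p) \<in> trel V W"
proof (induction xs)
  case Nil
  then show ?case by (auto simp: scmap_def fsum_Nil intro: trel_zeroI)
next
  case (Cons x xs)
  obtain v w where x: "x = (v, w)" by (cases x)
  have g: "(\<lambda>p. delta (vsc V c v, w) p - c * delta (v, w) p) \<in> trel V W"
    using Cons x by (intro trel.scl) auto
  have i: "(\<lambda>p. fsum (scmap V c xs) p - c * fsum xs p) \<in> trel V W" using Cons by auto
  show ?case
    by (rule trel_lin_eq[OF g i, where a=1 and b=1]) (simp add: x scmap_def fsum_Cons algebra_simps)
qed

lemma scmap_append: "scmap V c (xs @ ys) = scmap V c xs @ scmap V c ys"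
  by (simp add: scmap_def)

lemma set_scmap: "set xs \<subseteq> vcar V \<times> vcar W \<Longrightarrow> set (scmap V c xs) \<subseteq> vcar V \<times> vcar W"
  by (auto simp: scmap_def)

lemma teq_scmap: "teq V W xs ys \<Longrightarrow> teq V W (scmap V c xs) (scmap V c ys)"
proof -
  assume t: "teq V W xs ys"
  hence xs: "set xs \<subseteq> vcar V \<times> vcar W" and ys: "set ys \<subseteq> vcar V \<times> vcar W"
    and r: "(\<lambda>p. fsum xs p - fsum ys p :: 'k) \<in> trel V W" by (auto simp: teq_def)
  have a: "(\<lambda>p. fsum (scmap V c xs) p - c * fsum xs p) \<in> trel V W" by (rule fsum_scmap[OF xs])
  have b: "(\<lambda>p. fsum (scmap V c ys) p - c * fsum ys p) \<in> trel V W" by (rule fsum_scmap[OF ys])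
  have ab: "(\<lambda>p. 1 * (fsum (scmap V c xs) p - c * fsum xs p) + (-1) * (fsum (scmap V c ys) p - c * fsum ys p)) \<in> trel V W"
    by (rule trel_lin[OF a b])
  have "(\<lambda>p. fsum (scmap V c xs) p - fsum (scmap V c ys) p) \<in> trel V W"
    by (rule trel_lin_eq[OF ab r, where a=1 and b=c]) (simp add: algebra_simps)
  thus ?thesis using set_scmap xs ys by (simp add: teq_def)
qed

lemma tsp_car: "vcar (tsp V W) = {tclass V W xs | xs. set xs \<subseteq> vcar V \<times> vcar W}"
  by (simp add: tsp_def)

lemma tsp_carE: "t \<in> vcar (tsp V W) \<Longrightarrow> (\<And>xs. t = tclass V W xs \<Longrightarrow> set xs \<subseteq> vcar V \<times> vcar W \<Longrightarrow> P) \<Longrightarrow> P"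
  unfolding tsp_car by blast

lemma tclass_car: "set xs \<subseteq> vcar V \<times> vcar W \<Longrightarrow> tclass V W xs \<in> vcar (tsp V W)"
  unfolding tsp_car by blast

lemma tsp_add: "set xs \<subseteq> vcar V \<times> vcar W \<Longrightarrow> set ys \<subseteq> vcar V \<times> vcar W \<Longrightarrow>
    vadd (tsp V W) (tclass V W xs) (tclass V W ys) = tclass V W (xs @ ys)"
  unfolding tsp_def by (simp add: tclass_eq teq_append teq_sym trep_class)

lemma tsp_sc: "set xs \<subseteq> vcar V \<times> vcar W \<Longrightarrow>
    vsc (tsp V W) c (tclass V W xs) = tclass V W (scmap V c xs)"
proof -
  assume xs: "set xs \<subseteq> vcar V \<times> vcar W"
  have "vsc (tsp V W) c (tclass V W xs) = tclass V W (scmap V c (trep (tclass V W xs)))"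
    by (simp add: tsp_def scmap_def)
  also have "\<dots> = tclass V W (scmap V c xs)"
    by (rule tclass_eq[OF teq_scmap[OF teq_sym[OF trep_class(1)[OF xs]]]])
  finally show ?thesis .
qed

lemma tsp_zero: "vzero (tsp V W) = tclass V W []" by (simp add: tsp_def)

lemma trep_set: "t \<in> vcar (tsp V W) \<Longrightarrow> set (trep t) \<subseteq> vcar V \<times> vcar W"
  by (erule tsp_carE) (simp add: trep_class)

lemma tclass_append_commute:
  "set xs \<subseteq> vcar V \<times> vcar W \<Longrightarrow> set ys \<subseteq> vcar V \<times> vcar W \<Longrightarrow> tclass V W (xs @ ys) = tclass V W (ys @ xs)"
  by (rule tclass_eq) (auto simp: teq_def fsum_append intro: trel_zeroI)

lemma tclass_append_neg: "set xs \<subseteq> vcar V \<times> vcar W \<Longrightarrow> tclass V W (xs @ scmap V (-1) xs) = tclass V W []"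
proof (rule tclass_eq)
  assume xs: "set xs \<subseteq> vcar V \<times> vcar W"
  have a: "(\<lambda>p. fsum (scmap V (-1) xs) p - (-1) * fsum xs p) \<in> trel V W" by (rule fsum_scmap[OF xs])
  show "teq V W (xs @ scmap V (-1) xs) []"
    unfolding teq_def using xs set_scmap[OF xs]
    by (auto intro!: trel_lin_eq[OF a a, where a=1 and b=0] simp: fsum_append fsum_Nil)
qed

lemma tclass_scmap_add:
  assumes xs: "set xs \<subseteq> vcar V \<times> vcar W"
  shows "tclass V W (scmap V (c + d) xs) = tclass V W (scmap V c xs @ scmap V d xs)"
proof (rule tclass_eq)
  have a: "(\<lambda>p. fsum (scmap V (c + d) xs) p - (c + d) * fsum xs p) \<in> trel V W"
    and b: "(\<lambda>p. fsum (scmap V c xs) p - c * fsum xs p) \<in> trel V W"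
    and b': "(\<lambda>p. fsum (scmap V d xs) p - d * fsum xs p) \<in> trel V W" by (rule fsum_scmap[OF xs])+
  have ab: "(\<lambda>p. 1 * (fsum (scmap V (c + d) xs) p - (c + d) * fsum xs p)
      + (-1) * (fsum (scmap V c xs) p - c * fsum xs p)) \<in> trel V W"
    by (rule trel_lin[OF a b])
  show "teq V W (scmap V (c + d) xs) (scmap V c xs @ scmap V d xs)"
    unfolding teq_def using xs set_scmap[OF xs]
    by (auto intro!: trel_lin_eq[OF ab b', where a=1 and b="-1"] simp: fsum_append algebra_simps)
qed

lemma scmap_scmap: "set xs \<subseteq> vcar V \<times> vcar W \<Longrightarrow> scmap V c (scmap V d xs) = scmap V (c * d) xs"
  by (auto simp: scmap_def vs_sc_sc[OF V])

lemma scmap_one: "set xs \<subseteq> vcar V \<times> vcar W \<Longrightarrow> scmap V 1 xs = xs"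
  by (induction xs) (auto simp: scmap_def vs_one[OF V])

lemma tsp_neg_exists:
  "set xs \<subseteq> vcar V \<times> vcar W \<Longrightarrow> \<exists>y\<in>vcar (tsp V W). vadd (tsp V W) (tclass V W xs) y = tclass V W []"
  by (rule bexI[of _ "tclass V W (scmap V (-1) xs)"])
     (simp_all add: tsp_add set_scmap tclass_append_neg tclass_car)

lemma tsp_is_vs: "is_vs (tsp V W)"
proof -
  let ?T = "tsp V W" and ?L = "{xs. set xs \<subseteq> vcar V \<times> vcar W}"
  have car: "vcar ?T = tclass V W ` ?L" using tsp_car by auto
  have "vadd ?T (tclass V W xs) (tclass V W ys) = vadd ?T (tclass V W ys) (tclass V W xs)"
    if "xs \<in> ?L" "ys \<in> ?L" for xs ys
    using that by (simp add: tsp_add tclass_append_commute[of xs ys])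
  moreover have "vadd ?T (tclass V W xs) (tclass V W ys) \<in> vcar ?T"
    "vsc ?T c (vadd ?T (tclass V W xs) (tclass V W ys))
       = vadd ?T (vsc ?T c (tclass V W xs)) (vsc ?T c (tclass V W ys))"
    if "xs \<in> ?L" "ys \<in> ?L" for xs ys c
    using that by (simp_all add: tsp_add tsp_sc tclass_car set_scmap scmap_append)
  moreover have "vadd ?T (vadd ?T (tclass V W xs) (tclass V W ys)) (tclass V W zs)
      = vadd ?T (tclass V W xs) (vadd ?T (tclass V W ys) (tclass V W zs))"
    if "xs \<in> ?L" "ys \<in> ?L" "zs \<in> ?L" for xs ys zs
    using that by (simp add: tsp_add)
  moreover have "vsc ?T c (tclass V W xs) \<in> vcar ?T" "vadd ?T (vzero ?T) (tclass V W xs) = tclass V W xs"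
    "\<exists>y\<in>vcar ?T. vadd ?T (tclass V W xs) y = vzero ?T"
    "vsc ?T (c + d) (tclass V W xs) = vadd ?T (vsc ?T c (tclass V W xs)) (vsc ?T d (tclass V W xs))"
    "vsc ?T c (vsc ?T d (tclass V W xs)) = vsc ?T (c * d) (tclass V W xs)"
    "vsc ?T 1 (tclass V W xs) = tclass V W xs"
    if "xs \<in> ?L" for xs c d
    using that by (simp_all add: tsp_add tsp_sc tsp_zero tclass_car set_scmap scmap_scmap scmap_one
        tclass_scmap_add tsp_neg_exists)
  moreover have "vzero ?T \<in> vcar ?T" by (simp add: tsp_zero tclass_car)
  ultimately show ?thesis unfolding is_vs_def car by (simp add: image_iff)
qed

lemma tens_car[simp]: "v \<in> vcar V \<Longrightarrow> w \<in> vcar W \<Longrightarrow> tens V W v w \<in> vcar (tsp V W)"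
  unfolding tens_def by (rule tclass_car) simp

lemma tclass_Cons: "set (x # xs) \<subseteq> vcar V \<times> vcar W \<Longrightarrow>
   tclass V W (x # xs) = vadd (tsp V W) (tens V W (fst x) (snd x)) (tclass V W xs)"
  using tsp_add[of "[x]" xs] by (cases x) (simp add: tens_def)

lemma tens_lin1: "w \<in> vcar W \<Longrightarrow> linear_map V (tsp V W) (\<lambda>v. tens V W v w)"
proof (rule linI)
  fix x y assume w: "w \<in> vcar W" and x: "x \<in> vcar V" and y: "y \<in> vcar V"
  have "teq V W [(vadd V x y, w)] ([(x, w)] @ [(y, w)])"
    unfolding teq_def using x y w
    by (auto intro!: trel_lin_eq[OF trel.addl[OF x y w] trel.zero, where a=1 and b=0]
        simp: fsum_Cons fsum_Nil delta_def)
  thus "tens V W (vadd V x y) w = vadd (tsp V W) (tens V W x w) (tens V W y w)"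
    using x y w by (simp add: tens_def tsp_add tclass_eq)
qed (simp_all add: tens_def tsp_sc scmap_def tclass_car)

lemma tens_lin2: "v \<in> vcar V \<Longrightarrow> linear_map W (tsp V W) (\<lambda>w. tens V W v w)"
proof (rule linI)
  fix x y assume v: "v \<in> vcar V" and x: "x \<in> vcar W" and y: "y \<in> vcar W"
  have "teq V W [(v, vadd W x y)] ([(v, x)] @ [(v, y)])"
    unfolding teq_def using x y v
    by (auto intro!: trel_lin_eq[OF trel.addr[OF v x y] trel.zero, where a=1 and b=0]
        simp: fsum_Cons fsum_Nil delta_def)
  thus "tens V W v (vadd W x y) = vadd (tsp V W) (tens V W v x) (tens V W v y)"
    using x y v by (simp add: tens_def tsp_add tclass_eq)
next
  fix c x assume v: "v \<in> vcar V" and x: "x \<in> vcar W"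
  have "teq V W [(v, vsc W c x)] [(vsc V c v, x)]"
    unfolding teq_def using x v
    by (auto intro!: trel_lin_eq[OF trel.scr[OF v x] trel.scl[OF v x], where a=1 and b="-1"]
        simp: fsum_Cons fsum_Nil delta_def)
  thus "tens V W v (vsc W c x) = vsc (tsp V W) c (tens V W v x)"
    using x v by (simp add: tens_def tsp_sc scmap_def tclass_eq)
qed simp

lemma tens_bil: "bilinear_map V W (tsp V W) (tens V W)"
  by (rule bilI) (rule tens_lin1, simp, rule tens_lin2)

end

section \<open>Lifting bilinear maps along the tensor product\<close>

lemma tlift_lsum: "tlift U f t = lsum U f (trep t)"
  by (simp add: tlift_def lsum_def)

context fixes V :: "('k::field, 'a) vs" and W :: "('k, 'b) vs" and U :: "('k, 'c) vs"
  assumes V: "is_vs V" and W: "is_vs W" and U: "is_vs U"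
begin

lemma tlift_closed:
  "t \<in> vcar (tsp V W) \<Longrightarrow> (\<And>v w. v \<in> vcar V \<Longrightarrow> w \<in> vcar W \<Longrightarrow> F v w \<in> vcar U)
   \<Longrightarrow> tlift U F t \<in> vcar U"
  unfolding tlift_lsum by (rule lsum_closed[OF U trep_set[OF V W]])

lemma tlift_cong:
  "t \<in> vcar (tsp V W) \<Longrightarrow> (\<And>v w. v \<in> vcar V \<Longrightarrow> w \<in> vcar W \<Longrightarrow> F v w = G v w)
   \<Longrightarrow> tlift U F t = tlift U G t"
  unfolding tlift_lsum using trep_set[OF V W, of t] by (intro lsum_cong) auto

lemma tlift_add_fun:
  "t \<in> vcar (tsp V W) \<Longrightarrow> (\<And>v w. v \<in> vcar V \<Longrightarrow> w \<in> vcar W \<Longrightarrow> F v w \<in> vcar U)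
   \<Longrightarrow> (\<And>v w. v \<in> vcar V \<Longrightarrow> w \<in> vcar W \<Longrightarrow> G v w \<in> vcar U)
   \<Longrightarrow> tlift U (\<lambda>v w. vadd U (F v w) (G v w)) t = vadd U (tlift U F t) (tlift U G t)"
  unfolding tlift_lsum by (rule lsum_add_fun[OF U trep_set[OF V W]])

lemma tlift_sc_fun:
  "t \<in> vcar (tsp V W) \<Longrightarrow> (\<And>v w. v \<in> vcar V \<Longrightarrow> w \<in> vcar W \<Longrightarrow> F v w \<in> vcar U)
   \<Longrightarrow> tlift U (\<lambda>v w. vsc U c (F v w)) t = vsc U c (tlift U F t)"
  unfolding tlift_lsum by (rule lsum_sc_fun[OF U trep_set[OF V W]])

lemma tlift_map:
  "is_vs U' \<Longrightarrow> linear_map U U' L \<Longrightarrow> t \<in> vcar (tsp V W) \<Longrightarrow> (\<And>v w. v \<in> vcar V \<Longrightarrow> w \<in> vcar W \<Longrightarrow> F v w \<in> vcar U)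
   \<Longrightarrow> L (tlift U F t) = tlift U' (\<lambda>v w. L (F v w)) t"
  unfolding tlift_lsum by (rule lsum_map[OF U _ _ trep_set[OF V W]])

lemma linear_tlift_param:
  assumes X: "is_vs X" and t: "t \<in> vcar (tsp V W)"
    and F: "\<And>v w. v \<in> vcar V \<Longrightarrow> w \<in> vcar W \<Longrightarrow> linear_map X U (\<lambda>x. F x v w)"
  shows "linear_map X U (\<lambda>x. tlift U (F x) t)"
proof (rule linI)
  fix x assume x: "x \<in> vcar X"
  show "tlift U (F x) t \<in> vcar U" using tlift_closed[OF t] linD(1)[OF F] x by blast
next
  fix x y assume x: "x \<in> vcar X" and y: "y \<in> vcar X"
  have "tlift U (F (vadd X x y)) t = tlift U (\<lambda>v w. vadd U (F x v w) (F y v w)) t"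
    by (rule tlift_cong[OF t]) (use linD(2)[OF F] x y in auto)
  also have "\<dots> = vadd U (tlift U (F x) t) (tlift U (F y) t)"
    by (rule tlift_add_fun[OF t]) (use linD(1)[OF F] x y in auto)
  finally show "tlift U (F (vadd X x y)) t = vadd U (tlift U (F x) t) (tlift U (F y) t)" .
next
  fix c x assume x: "x \<in> vcar X"
  have "tlift U (F (vsc X c x)) t = tlift U (\<lambda>v w. vsc U c (F x v w)) t"
    by (rule tlift_cong[OF t]) (use linD(3)[OF F] x in auto)
  also have "\<dots> = vsc U c (tlift U (F x) t)"
    by (rule tlift_sc_fun[OF t]) (use linD(1)[OF F] x in auto)
  finally show "tlift U (F (vsc X c x)) t = vsc U c (tlift U (F x) t)" .
qed

context fixes F assumes F: "bilinear_map V W U F"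
begin

lemma tlift_class: "set xs \<subseteq> vcar V \<times> vcar W \<Longrightarrow> tlift U F (tclass V W xs) = lsum U F xs"
  unfolding tlift_lsum using lsum_teq[OF V W U F teq_sym[OF V W trep_class(1)[OF V W]]] by blast

lemma tlift_tens: "v \<in> vcar V \<Longrightarrow> w \<in> vcar W \<Longrightarrow> tlift U F (tens V W v w) = F v w"
  unfolding tens_def using tlift_class[of "[(v, w)]"] bilD(1)[OF F] U by simp

lemma lsum_scmap: "set xs \<subseteq> vcar V \<times> vcar W \<Longrightarrow> lsum U F (scmap V c xs) = vsc U c (lsum U F xs)"
proof (induction xs)
  case (Cons x xs)
  have "lsum U F xs \<in> vcar U" by (rule lsum_closed[OF U]) (use Cons bilD(1)[OF F] in auto)
  then show ?case using Cons bilD[OF F] vs_sc_add[OF U] by (cases x) (simp add: scmap_def)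
qed (simp add: U scmap_def)

lemma tlift_lin: "linear_map (tsp V W) U (tlift U F)"
proof (rule linI)
  fix x assume "x \<in> vcar (tsp V W)"
  then show "tlift U F x \<in> vcar U" using tlift_closed bilD(1)[OF F] by blast
next
  fix x y assume "x \<in> vcar (tsp V W)" "y \<in> vcar (tsp V W)"
  then show "tlift U F (vadd (tsp V W) x y) = vadd U (tlift U F x) (tlift U F y)"
    by (elim tsp_carE[OF V W]) (simp add: tsp_add[OF V W] tlift_class lsum_append[OF U] bilD(1)[OF F])
next
  fix c x assume "x \<in> vcar (tsp V W)"
  then show "tlift U F (vsc (tsp V W) c x) = vsc U c (tlift U F x)"
    by (elim tsp_carE[OF V W]) (simp add: tsp_sc[OF V W] tlift_class set_scmap[OF V W] lsum_scmap)
qed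

end

lemma tsp_ext:
  assumes g: "linear_map (tsp V W) U g" and g': "linear_map (tsp V W) U g'"
    and e: "\<And>v w. v \<in> vcar V \<Longrightarrow> w \<in> vcar W \<Longrightarrow> g (tens V W v w) = g' (tens V W v w)"
    and t: "t \<in> vcar (tsp V W)"
  shows "g t = g' t"
proof -
  obtain xs where x: "t = tclass V W xs" "set xs \<subseteq> vcar V \<times> vcar W" using t by (auto simp: tsp_car[OF V W])
  have "g (tclass V W xs) = g' (tclass V W xs)" using x(2)
  proof (induction xs)
    case Nil
    then show ?case using lin_zero[OF tsp_is_vs[OF V W] U g] lin_zero[OF tsp_is_vs[OF V W] U g']
      by (simp add: tsp_zero[OF V W])
  next
    case (Cons a xs)
    have c: "fst a \<in> vcar V" "snd a \<in> vcar W" using Cons by auto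
    have xs: "tclass V W xs \<in> vcar (tsp V W)" using Cons tclass_car[OF V W] by auto
    show ?case unfolding tclass_Cons[OF V W Cons.prems]
      using linD(2)[OF g _ xs] linD(2)[OF g' _ xs] c Cons e tens_car[OF V W] by auto
  qed
  then show ?thesis using x by simp
qed

end

lemma tlift_tens_id:
  assumes V: "is_vs V" and W: "is_vs W" and t: "t \<in> vcar (tsp V W)"
  shows "tlift (tsp V W) (tens V W) t = t"
proof -
  have l: "linear_map (tsp V W) (tsp V W) (\<lambda>x. x)" by (rule linI) auto
  show ?thesis
    by (rule tsp_ext[OF V W tsp_is_vs[OF V W] tlift_lin[OF V W tsp_is_vs[OF V W] tens_bil[OF V W]] l _ t])
       (simp add: tlift_tens[OF V W tsp_is_vs[OF V W] tens_bil[OF V W]])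
qed

lemma tlift_swap:
  fixes V :: "('k::field, 'a) vs" and W :: "('k, 'b) vs" and U :: "('k, 'c) vs"
    and V' :: "('k, 'd) vs" and W' :: "('k, 'e) vs"
  assumes V: "is_vs V" "is_vs W" "is_vs V'" "is_vs W'" and U: "is_vs U"
    and t: "t \<in> vcar (tsp V W)" and s: "s \<in> vcar (tsp V' W')"
    and F: "\<And>v w v' w'. v \<in> vcar V \<Longrightarrow> w \<in> vcar W \<Longrightarrow> v' \<in> vcar V' \<Longrightarrow> w' \<in> vcar W' \<Longrightarrow> F v w v' w' \<in> vcar U"
  shows "tlift U (\<lambda>v w. tlift U (\<lambda>v' w'. F v w v' w') s) t = tlift U (\<lambda>v' w'. tlift U (\<lambda>v w. F v w v' w') t) s"
  unfolding tlift_lsum by (rule lsum_swap[OF U trep_set[OF V(3,4) s] F trep_set[OF V(1,2) t]])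

lemma lin_tens_comp1:
  "is_vs V \<Longrightarrow> is_vs W \<Longrightarrow> linear_map X V F \<Longrightarrow> w \<in> vcar W \<Longrightarrow> linear_map X (tsp V W) (\<lambda>x. tens V W (F x) w)"
  by (rule lin_bil_comp1[OF tens_bil])

lemma lin_tens_comp2:
  "is_vs V \<Longrightarrow> is_vs W \<Longrightarrow> v \<in> vcar V \<Longrightarrow> linear_map X W G \<Longrightarrow> linear_map X (tsp V W) (\<lambda>x. tens V W v (G x))"
  by (rule lin_bil_comp2[OF tens_bil])

lemma lin_tlift_comp:
  "is_vs V \<Longrightarrow> is_vs W \<Longrightarrow> is_vs U \<Longrightarrow> bilinear_map V W U K \<Longrightarrow> linear_map X (tsp V W) G \<Longrightarrow>
   linear_map X U (\<lambda>x. tlift U K (G x))"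
  by (rule lin_comp[OF _ tlift_lin])

lemma tlift_tlift:
  fixes V :: "('k::field,'a) vs" and W :: "('k,'b) vs" and U :: "('k,'c) vs"
    and V' :: "('k,'d) vs" and W' :: "('k,'e) vs"
  assumes V: "is_vs V" "is_vs W" "is_vs V'" "is_vs W'" "is_vs U" and K: "bilinear_map V' W' U K"
    and t: "t \<in> vcar (tsp V W)"
    and G: "\<And>v w. v \<in> vcar V \<Longrightarrow> w \<in> vcar W \<Longrightarrow> G v w \<in> vcar (tsp V' W')"
  shows "tlift U K (tlift (tsp V' W') G t) = tlift U (\<lambda>v w. tlift U K (G v w)) t"
  by (rule tlift_map[OF V(1,2) tsp_is_vs[OF V(3,4)] V(5) tlift_lin[OF V(3,4,5) K] t G])

lemma tlift_tmap:
  fixes V :: "('k::field,'a) vs" and W :: "('k,'b) vs" and U :: "('k,'c) vs"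
    and V' :: "('k,'d) vs" and W' :: "('k,'e) vs"
  assumes V: "is_vs V" "is_vs W" "is_vs V'" "is_vs W'" "is_vs U" and K: "bilinear_map V' W' U K"
    and t: "t \<in> vcar (tsp V W)"
    and f: "\<And>v. v \<in> vcar V \<Longrightarrow> f v \<in> vcar V'" and g: "\<And>w. w \<in> vcar W \<Longrightarrow> g w \<in> vcar W'"
  shows "tlift U K (tmap V' W' f g t) = tlift U (\<lambda>v w. K (f v) (g w)) t"
proof -
  have "tlift U K (tmap V' W' f g t) = tlift U (\<lambda>v w. tlift U K (tens V' W' (f v) (g w))) t"
    unfolding tmap_def by (rule tlift_tlift[OF V K t]) (simp add: f g tens_car[OF V(3,4)])
  also have "\<dots> = tlift U (\<lambda>v w. K (f v) (g w)) t"
    by (rule tlift_cong[OF V(1,2,5) t]) (simp add: f g tlift_tens[OF V(3,4,5) K])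
  finally show ?thesis .
qed

lemma tmap_closed:
  fixes V :: "('k::field,'a) vs" and W :: "('k,'b) vs" and V' :: "('k,'d) vs" and W' :: "('k,'e) vs"
  assumes V: "is_vs V" "is_vs W" "is_vs V'" "is_vs W'" and t: "t \<in> vcar (tsp V W)"
    and f: "\<And>v. v \<in> vcar V \<Longrightarrow> f v \<in> vcar V'" and g: "\<And>w. w \<in> vcar W \<Longrightarrow> g w \<in> vcar W'"
  shows "tmap V' W' f g t \<in> vcar (tsp V' W')"
  unfolding tmap_def by (rule tlift_closed[OF V(1,2) tsp_is_vs[OF V(3,4)] t]) (simp add: f g tens_car[OF V(3,4)])

lemma tmap_bil:
  fixes V :: "('k::field,'a) vs" and W :: "('k,'b) vs" and V' :: "('k,'d) vs" and W' :: "('k,'e) vs"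
  assumes V: "is_vs V" "is_vs W" "is_vs V'" "is_vs W'" and f: "linear_map V V' f" and g: "linear_map W W' g"
  shows "bilinear_map V W (tsp V' W') (\<lambda>v w. tens V' W' (f v) (g w))"
  by (rule bilI) (auto intro!: lin_tens_comp1 lin_tens_comp2 V f g linD(1)[OF f] linD(1)[OF g])

lemma tmap_tens:
  fixes V :: "('k::field,'a) vs" and W :: "('k,'b) vs" and V' :: "('k,'d) vs" and W' :: "('k,'e) vs"
  assumes V: "is_vs V" "is_vs W" "is_vs V'" "is_vs W'" and f: "linear_map V V' f" and g: "linear_map W W' g"
    and v: "v \<in> vcar V" and w: "w \<in> vcar W"
  shows "tmap V' W' f g (tens V W v w) = tens V' W' (f v) (g w)"
  unfolding tmap_def by (rule tlift_tens[OF V(1,2) tsp_is_vs[OF V(3,4)] tmap_bil[OF V f g] v w])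

lemma tmap_lin:
  fixes V :: "('k::field,'a) vs" and W :: "('k,'b) vs" and V' :: "('k,'d) vs" and W' :: "('k,'e) vs"
  assumes V: "is_vs V" "is_vs W" "is_vs V'" "is_vs W'" and f: "linear_map V V' f" and g: "linear_map W W' g"
  shows "linear_map (tsp V W) (tsp V' W') (tmap V' W' f g)"
  unfolding tmap_def by (rule tlift_lin[OF V(1,2) tsp_is_vs[OF V(3,4)] tmap_bil[OF V f g]])

context
  fixes V1 :: "('k::field, 'a) vs" and V2 :: "('k, 'b) vs" and V3 :: "('k, 'c) vs"
  assumes V1: "is_vs V1" and V2: "is_vs V2" and V3: "is_vs V3"
begin

lemma tassoc_inner_bil:
  "bilinear_map (tsp V1 V2) V3 (tsp V1 (tsp V2 V3))
     (\<lambda>s z. tlift (tsp V1 (tsp V2 V3)) (\<lambda>x y. tens V1 (tsp V2 V3) x (tens V2 V3 y z)) s)"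
proof -
  have V23: "is_vs (tsp V2 V3)" using V2 V3 by (rule tsp_is_vs)
  have lin_z: "linear_map V3 (tsp V1 (tsp V2 V3)) (\<lambda>z. tens V1 (tsp V2 V3) x (tens V2 V3 y z))"
    if "x \<in> vcar V1" "y \<in> vcar V2" for x y
    by (rule lin_bil_comp2[OF tens_bil[OF V1 V23] that(1) bil_lin2[OF tens_bil[OF V2 V3] that(2)]])
  have bil_xy: "bilinear_map V1 V2 (tsp V1 (tsp V2 V3)) (\<lambda>x y. tens V1 (tsp V2 V3) x (tens V2 V3 y z))"
    if "z \<in> vcar V3" for z
  proof (rule bilI)
    show "linear_map V1 (tsp V1 (tsp V2 V3)) (\<lambda>x. tens V1 (tsp V2 V3) x (tens V2 V3 y z))" if "y \<in> vcar V2" for y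
      by (rule bil_lin1[OF tens_bil[OF V1 V23]]) (simp add: V2 V3 \<open>z \<in> vcar V3\<close> that)
    show "linear_map V2 (tsp V1 (tsp V2 V3)) (\<lambda>y. tens V1 (tsp V2 V3) x (tens V2 V3 y z))" if "x \<in> vcar V1" for x
      by (rule lin_bil_comp2[OF tens_bil[OF V1 V23] that bil_lin1[OF tens_bil[OF V2 V3] \<open>z \<in> vcar V3\<close>]])
  qed
  show ?thesis
  proof (rule bilI)
    show "linear_map (tsp V1 V2) (tsp V1 (tsp V2 V3))
        (\<lambda>s. tlift (tsp V1 (tsp V2 V3)) (\<lambda>x y. tens V1 (tsp V2 V3) x (tens V2 V3 y z)) s)" if "z \<in> vcar V3" for z
      by (rule tlift_lin[OF V1 V2 tsp_is_vs[OF V1 V23] bil_xy[OF that]])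
    show "linear_map V3 (tsp V1 (tsp V2 V3))
        (\<lambda>z. tlift (tsp V1 (tsp V2 V3)) (\<lambda>x y. tens V1 (tsp V2 V3) x (tens V2 V3 y z)) s)" if "s \<in> vcar (tsp V1 V2)" for s
      by (rule linear_tlift_param[OF V1 V2 tsp_is_vs[OF V1 V23] V3 that lin_z])
  qed
qed

lemma tassoc_lin: "linear_map (tsp (tsp V1 V2) V3) (tsp V1 (tsp V2 V3)) (tassoc V1 V2 V3)"
  unfolding tassoc_def by (rule tlift_lin[OF tsp_is_vs[OF V1 V2] V3 tsp_is_vs[OF V1 tsp_is_vs[OF V2 V3]] tassoc_inner_bil])

lemma tassoc_tens: "s \<in> vcar (tsp V1 V2) \<Longrightarrow> z \<in> vcar V3 \<Longrightarrow>
  tassoc V1 V2 V3 (tens (tsp V1 V2) V3 s z) = tlift (tsp V1 (tsp V2 V3)) (\<lambda>x y. tens V1 (tsp V2 V3) x (tens V2 V3 y z)) s"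
  unfolding tassoc_def by (rule tlift_tens[OF tsp_is_vs[OF V1 V2] V3 tsp_is_vs[OF V1 tsp_is_vs[OF V2 V3]] tassoc_inner_bil])

lemma tens_tlift_expand:
  assumes x: "x \<in> vcar V1" and t: "t \<in> vcar (tsp V2 V3)"
  shows "tens V1 (tsp V2 V3) x t = tlift (tsp V1 (tsp V2 V3)) (\<lambda>y z. tens V1 (tsp V2 V3) x (tens V2 V3 y z)) t"
proof -
  have "tens V1 (tsp V2 V3) x t = tens V1 (tsp V2 V3) x (tlift (tsp V2 V3) (tens V2 V3) t)"
    using tlift_tens_id[OF V2 V3 t] by simp
  also have "\<dots> = tlift (tsp V1 (tsp V2 V3)) (\<lambda>y z. tens V1 (tsp V2 V3) x (tens V2 V3 y z)) t"
    by (rule tlift_map[OF V2 V3 tsp_is_vs[OF V2 V3] tsp_is_vs[OF V1 tsp_is_vs[OF V2 V3]] bil_lin2[OF tens_bil[OF V1 tsp_is_vs[OF V2 V3]] x] t])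
       (use V1 V2 V3 x in \<open>simp_all add: tsp_is_vs\<close>)
  finally show ?thesis .
qed

context
  fixes U :: "('k, 'd) vs" and G assumes U: "is_vs U" and G: "trilinear_map V1 V2 V3 U G"
begin

lemma trilinear_tlift_bil23: "bilinear_map V1 (tsp V2 V3) U (\<lambda>x t. tlift U (G x) t)"
proof (rule bilI)
  show "linear_map V1 U (\<lambda>x. tlift U (G x) t)" if "t \<in> vcar (tsp V2 V3)" for t
    by (rule linear_tlift_param[OF V2 V3 U V1 that]) (rule trilinear_lin1[OF G])
  show "linear_map (tsp V2 V3) U (tlift U (G x))" if "x \<in> vcar V1" for x
    by (rule tlift_lin[OF V2 V3 U trilinear_bil23[OF G that]])
qed

lemma trilinear_tlift_bil12: "bilinear_map (tsp V1 V2) V3 U (\<lambda>s z. tlift U (\<lambda>x y. G x y z) s)"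
proof (rule bilI)
  show "linear_map (tsp V1 V2) U (tlift U (\<lambda>x y. G x y z))" if "z \<in> vcar V3" for z
    by (rule tlift_lin[OF V1 V2 U trilinear_bil12[OF G that]])
  show "linear_map V3 U (\<lambda>z. tlift U (\<lambda>x y. G x y z) s)" if "s \<in> vcar (tsp V1 V2)" for s
    by (rule linear_tlift_param[OF V1 V2 U V3 that]) (rule trilinear_lin3[OF G])
qed

lemma tlift_tassoc:
  assumes e: "e \<in> vcar (tsp (tsp V1 V2) V3)"
  shows "tlift U (\<lambda>x t. tlift U (G x) t) (tassoc V1 V2 V3 e) = tlift U (\<lambda>s z. tlift U (\<lambda>x y. G x y z) s) e"
proof -
  let ?K = "\<lambda>x t. tlift U (G x) t" and ?T = "tsp V1 (tsp V2 V3)"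
  have V23: "is_vs (tsp V2 V3)" and V12: "is_vs (tsp V1 V2)" and T: "is_vs ?T"
    by (simp_all add: V1 V2 V3 tsp_is_vs)
  have "tlift U ?K (tassoc V1 V2 V3 e)
     = tlift U (\<lambda>s z. tlift U ?K (tlift ?T (\<lambda>x y. tens V1 (tsp V2 V3) x (tens V2 V3 y z)) s)) e"
    unfolding tassoc_def
    by (rule tlift_tlift[OF V12 V3 V1 V23 U trilinear_tlift_bil23 e])
       (auto intro!: tlift_closed[OF V1 V2 T] tens_car V1 V2 V3 V23)
  also have "\<dots> = tlift U (\<lambda>s z. tlift U (\<lambda>x y. tlift U ?K (tens V1 (tsp V2 V3) x (tens V2 V3 y z))) s) e"
    by (rule tlift_cong[OF V12 V3 U e], rule tlift_tlift[OF V1 V2 V1 V23 U trilinear_tlift_bil23])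
       (auto intro!: tens_car V1 V2 V3 V23)
  also have "\<dots> = tlift U (\<lambda>s z. tlift U (\<lambda>x y. G x y z) s) e"
  proof (rule tlift_cong[OF V12 V3 U e], rule tlift_cong[OF V1 V2 U])
    fix x y z assume x: "x \<in> vcar V1" and y: "y \<in> vcar V2" and z: "z \<in> vcar V3"
    have "tlift U ?K (tens V1 (tsp V2 V3) x (tens V2 V3 y z)) = tlift U (G x) (tens V2 V3 y z)"
      by (rule tlift_tens[OF V1 V23 U trilinear_tlift_bil23 x]) (simp add: V2 V3 y z)
    also have "\<dots> = G x y z" by (rule tlift_tens[OF V2 V3 U trilinear_bil23[OF G x] y z])
    finally show "tlift U ?K (tens V1 (tsp V2 V3) x (tens V2 V3 y z)) = G x y z" .
  qed
  finally show ?thesis .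
qed

end

end

lemma tsp_ext2:
  fixes V :: "('k::field, 'a) vs" and W :: "('k, 'b) vs" and V' :: "('k, 'c) vs" and W' :: "('k, 'd) vs"
    and X :: "('k, 'x) vs"
  assumes vs: "is_vs V" "is_vs W" "is_vs V'" "is_vs W'" "is_vs X"
    and F: "bilinear_map (tsp V W) (tsp V' W') X F" and G: "bilinear_map (tsp V W) (tsp V' W') X G"
    and e: "\<And>v w v' w'. v \<in> vcar V \<Longrightarrow> w \<in> vcar W \<Longrightarrow> v' \<in> vcar V' \<Longrightarrow> w' \<in> vcar W' \<Longrightarrow>
        F (tens V W v w) (tens V' W' v' w') = G (tens V W v w) (tens V' W' v' w')"
    and x: "x \<in> vcar (tsp V W)" and y: "y \<in> vcar (tsp V' W')"
  shows "F x y = G x y"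
proof -
  have "F (tens V W v w) y = G (tens V W v w) y" if "v \<in> vcar V" "w \<in> vcar W" for v w
    by (rule tsp_ext[OF vs(3,4,5) bil_lin2[OF F] bil_lin2[OF G] _ y]) (simp_all add: vs that e)
  then show ?thesis by (rule tsp_ext[OF vs(1,2,5) bil_lin1[OF F y] bil_lin1[OF G y] _ x])
qed

lemma tsp_ext3:
  fixes V :: "('k::field, 'a) vs" and W :: "('k, 'b) vs" and X :: "('k, 'x) vs"
  assumes vs: "is_vs V" "is_vs W" "is_vs X"
    and F: "trilinear_map (tsp V W) (tsp V W) (tsp V W) X F"
    and G: "trilinear_map (tsp V W) (tsp V W) (tsp V W) X G"
    and e: "\<And>v w v' w' v'' w''. v \<in> vcar V \<Longrightarrow> w \<in> vcar W \<Longrightarrow> v' \<in> vcar V \<Longrightarrow> w' \<in> vcar W \<Longrightarrow>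
        v'' \<in> vcar V \<Longrightarrow> w'' \<in> vcar W \<Longrightarrow>
        F (tens V W v w) (tens V W v' w') (tens V W v'' w'') = G (tens V W v w) (tens V W v' w') (tens V W v'' w'')"
    and x: "x \<in> vcar (tsp V W)" and y: "y \<in> vcar (tsp V W)" and z: "z \<in> vcar (tsp V W)"
  shows "F x y z = G x y z"
proof -
  have "F (tens V W v w) y z = G (tens V W v w) y z" if "v \<in> vcar V" "w \<in> vcar W" for v w
    by (rule tsp_ext2[OF vs(1,2,1,2,3) trilinear_bil23[OF F] trilinear_bil23[OF G] _ y z])
       (simp_all add: vs that e)
  then show ?thesis by (rule tsp_ext[OF vs trilinear_lin1[OF F y z] trilinear_lin1[OF G y z] _ x])
qed

section \<open>The Hom-smash product\<close>

locale hom_smash =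
  fixes H :: "('k::field, 'h) vs" and A :: "('k, 'a) vs"
    and muH :: "'h \<Rightarrow> 'h \<Rightarrow> 'h" and De :: "'h \<Rightarrow> ('h \<times> 'h) list set" and alH :: "'h \<Rightarrow> 'h"
    and muA :: "'a \<Rightarrow> 'a \<Rightarrow> 'a" and alA :: "'a \<Rightarrow> 'a" and act :: "'h \<Rightarrow> 'a \<Rightarrow> 'a"
  assumes bialg: "hom_bialg H muH De alH"
    and modalg: "module_hom_alg H muH De alH A muA alA act"
    and bijH: "bij_betw alH (vcar H) (vcar H)"
    and bijA: "bij_betw alA (vcar A) (vcar A)"
begin

abbreviation "iH \<equiv> the_inv_into (vcar H) alH"
abbreviation "iA \<equiv> the_inv_into (vcar A) alA"

lemma vs_H[simp]: "is_vs H" using bialg by (simp add: hom_bialg_def hom_assoc_def)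
lemma vs_A[simp]: "is_vs A" using modalg by (simp add: module_hom_alg_def hom_assoc_def)
lemma vs_HH[simp]: "is_vs (tsp H H)" by (rule tsp_is_vs[OF vs_H vs_H])

lemma muH_bil: "bilinear_map H H H muH" using bialg by (simp add: hom_bialg_def hom_assoc_def)
lemma alH_lin: "linear_map H H alH" using bialg by (simp add: hom_bialg_def hom_assoc_def)
lemma muA_bil: "bilinear_map A A A muA" using modalg by (simp add: module_hom_alg_def hom_assoc_def)
lemma alA_lin: "linear_map A A alA" using modalg by (simp add: module_hom_alg_def hom_assoc_def)
lemma act_bil: "bilinear_map H A A act" using modalg by (simp add: module_hom_alg_def)
lemma De_lin: "linear_map H (tsp H H) De" using bialg by (simp add: hom_bialg_def)

lemma muH_closed[simp]: "x \<in> vcar H \<Longrightarrow> y \<in> vcar H \<Longrightarrow> muH x y \<in> vcar H" using bilD(1)[OF muH_bil] .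
lemma muA_closed[simp]: "x \<in> vcar A \<Longrightarrow> y \<in> vcar A \<Longrightarrow> muA x y \<in> vcar A" using bilD(1)[OF muA_bil] .
lemma act_closed[simp]: "x \<in> vcar H \<Longrightarrow> y \<in> vcar A \<Longrightarrow> act x y \<in> vcar A" using bilD(1)[OF act_bil] .
lemma alH_closed[simp]: "x \<in> vcar H \<Longrightarrow> alH x \<in> vcar H" using linD(1)[OF alH_lin] .
lemma alA_closed[simp]: "x \<in> vcar A \<Longrightarrow> alA x \<in> vcar A" using linD(1)[OF alA_lin] .
lemma De_closed[simp]: "x \<in> vcar H \<Longrightarrow> De x \<in> vcar (tsp H H)" using linD(1)[OF De_lin] .

lemma iH_closed[simp]: "x \<in> vcar H \<Longrightarrow> iH x \<in> vcar H"
  using bijH by (metis bij_betw_def bij_betw_the_inv_into bij_betwE)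
lemma iA_closed[simp]: "x \<in> vcar A \<Longrightarrow> iA x \<in> vcar A"
  using bijA by (metis bij_betw_def bij_betw_the_inv_into bij_betwE)
lemma alH_iH[simp]: "x \<in> vcar H \<Longrightarrow> alH (iH x) = x"
  using bijH by (simp add: f_the_inv_into_f_bij_betw)
lemma alA_iA[simp]: "x \<in> vcar A \<Longrightarrow> alA (iA x) = x"
  using bijA by (simp add: f_the_inv_into_f_bij_betw)
lemma iH_alH[simp]: "x \<in> vcar H \<Longrightarrow> iH (alH x) = x"
  using bijH by (simp add: bij_betw_def the_inv_into_f_f)
lemma iA_alA[simp]: "x \<in> vcar A \<Longrightarrow> iA (alA x) = x"
  using bijA by (simp add: bij_betw_def the_inv_into_f_f)

lemma iH_lin: "linear_map H H iH" by (rule the_inv_into_linear[OF vs_H alH_lin bijH])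
lemma iA_lin: "linear_map A A iA" by (rule the_inv_into_linear[OF vs_A alA_lin bijA])

lemmas lin_muA1 = lin_bil_comp1[OF muA_bil] and lin_muA2 = lin_bil_comp2[OF muA_bil]
lemmas lin_muH1 = lin_bil_comp1[OF muH_bil] and lin_muH2 = lin_bil_comp2[OF muH_bil]
lemmas lin_act1 = lin_bil_comp1[OF act_bil] and lin_act2 = lin_bil_comp2[OF act_bil]
lemmas lin_alA = lin_comp[OF _ alA_lin] and lin_alH = lin_comp[OF _ alH_lin]
lemmas lin_iA = lin_comp[OF _ iA_lin] and lin_iH = lin_comp[OF _ iH_lin]
lemmas lin_De = lin_comp[OF _ De_lin]

lemmas linear_intros = lin_id lin_tens_comp1 lin_tens_comp2 linear_tlift_param lin_tlift_comp lin_muA1 lin_muA2 lin_muH1 lin_muH2 lin_act1 lin_act2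
  lin_alA lin_alH lin_iA lin_iH lin_De bilI
lemmas closed_intros = tlift_closed tens_car muH_closed muA_closed act_closed alH_closed alA_closed iH_closed iA_closed De_closed tsp_is_vs vs_H vs_A

lemma hom_assocH: "x \<in> vcar H \<Longrightarrow> y \<in> vcar H \<Longrightarrow> z \<in> vcar H \<Longrightarrow> muH (alH x) (muH y z) = muH (muH x y) (alH z)"
  using bialg by (simp add: hom_bialg_def hom_assoc_def)
lemma hom_assocA: "x \<in> vcar A \<Longrightarrow> y \<in> vcar A \<Longrightarrow> z \<in> vcar A \<Longrightarrow> muA (alA x) (muA y z) = muA (muA x y) (alA z)"
  using modalg by (simp add: module_hom_alg_def hom_assoc_def)
lemma alH_mu[simp]: "x \<in> vcar H \<Longrightarrow> y \<in> vcar H \<Longrightarrow> alH (muH x y) = muH (alH x) (alH y)"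
  using bialg by (simp add: hom_bialg_def hom_assoc_def)
lemma alA_mu[simp]: "x \<in> vcar A \<Longrightarrow> y \<in> vcar A \<Longrightarrow> alA (muA x y) = muA (alA x) (alA y)"
  using modalg by (simp add: module_hom_alg_def hom_assoc_def)
lemma alA_act[simp]: "h \<in> vcar H \<Longrightarrow> a \<in> vcar A \<Longrightarrow> alA (act h a) = act (alH h) (alA a)"
  using modalg by (simp add: module_hom_alg_def)
lemma act_act: "h \<in> vcar H \<Longrightarrow> h' \<in> vcar H \<Longrightarrow> a \<in> vcar A \<Longrightarrow> act (alH h) (act h' a) = act (muH h h') (alA a)"
  using modalg by (simp add: module_hom_alg_def)
lemma act_mu: "h \<in> vcar H \<Longrightarrow> a \<in> vcar A \<Longrightarrow> a' \<in> vcar A \<Longrightarrow>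
   act (alH (alH h)) (muA a a') = tlift A (\<lambda>x y. muA (act x a) (act y a')) (De h)"
  using modalg by (simp add: module_hom_alg_def)
lemma De_al: "h \<in> vcar H \<Longrightarrow> De (alH h) = tmap H H alH alH (De h)"
  using bialg by (simp add: hom_bialg_def)
lemma De_mu: "h \<in> vcar H \<Longrightarrow> h' \<in> vcar H \<Longrightarrow> De (muH h h') = tmul H H muH muH (De h) (De h')"
  using bialg by (simp add: hom_bialg_def)
lemma coassoc: "h \<in> vcar H \<Longrightarrow> tassoc H H H (tmap (tsp H H) H De alH (De h)) = tmap H (tsp H H) alH De (De h)"
  using bialg by (simp add: hom_bialg_def)

lemma iH_mu[simp]: "x \<in> vcar H \<Longrightarrow> y \<in> vcar H \<Longrightarrow> iH (muH x y) = muH (iH x) (iH y)"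
  using iH_alH[of "muH (iH x) (iH y)"] by simp

lemma iA_mu[simp]: "x \<in> vcar A \<Longrightarrow> y \<in> vcar A \<Longrightarrow> iA (muA x y) = muA (iA x) (iA y)"
  using iA_alA[of "muA (iA x) (iA y)"] by simp

lemma iA_act[simp]: "h \<in> vcar H \<Longrightarrow> a \<in> vcar A \<Longrightarrow> iA (act h a) = act (iH h) (iA a)"
  using iA_alA[of "act (iH h) (iA a)"] by simp

lemma tlift_De_alH:
  fixes U :: "('k, 'u) vs"
  assumes U: "is_vs U" and K: "bilinear_map H H U K" and h: "h \<in> vcar H"
  shows "tlift U K (De (alH h)) = tlift U (\<lambda>x y. K (alH x) (alH y)) (De h)"
  unfolding De_al[OF h] by (rule tlift_tmap[OF vs_H vs_H vs_H vs_H U K De_closed[OF h]]) auto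

lemma tlift_De_iH:
  fixes U :: "('k, 'u) vs"
  assumes U: "is_vs U" and K: "bilinear_map H H U K" and h: "h \<in> vcar H"
  shows "tlift U K (De (iH h)) = tlift U (\<lambda>x y. K (iH x) (iH y)) (De h)"
proof -
  have K': "bilinear_map H H U (\<lambda>x y. K (iH x) (iH y))"
    by (rule bilI) (auto intro!: lin_comp[OF iH_lin bil_lin1[OF K]] lin_comp[OF iH_lin bil_lin2[OF K]])
  have "tlift U (\<lambda>x y. K (iH x) (iH y)) (De h) = tlift U (\<lambda>x y. K (iH x) (iH y)) (De (alH (iH h)))"
    using h by simp
  also have "\<dots> = tlift U (\<lambda>x y. K (iH (alH x)) (iH (alH y))) (De (iH h))"
    by (rule tlift_De_alH[OF U K']) (use h in simp)
  also have "\<dots> = tlift U K (De (iH h))"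
    by (rule tlift_cong[OF vs_H vs_H U De_closed]) (use h in simp_all)
  finally show ?thesis ..
qed

lemma tlift_tmul:
  fixes U :: "('k, 'u) vs"
  assumes U: "is_vs U" and K: "bilinear_map H H U K"
    and s: "s \<in> vcar (tsp H H)" and s': "s' \<in> vcar (tsp H H)"
  shows "tlift U K (tmul H H muH muH s s') = tlift U (\<lambda>d e. tlift U (\<lambda>d' e'. K (muH d d') (muH e e')) s') s"
proof -
  have "tlift U K (tmul H H muH muH s s')
     = tlift U (\<lambda>d e. tlift U K (tlift (tsp H H) (\<lambda>d' e'. tens H H (muH d d') (muH e e')) s')) s"
    unfolding tmul_def by (rule tlift_tlift[OF vs_H vs_H vs_H vs_H U K s]) (auto intro!: closed_intros s')
  also have "\<dots> = tlift U (\<lambda>d e. tlift U (\<lambda>d' e'. K (muH d d') (muH e e')) s') s"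
  proof (rule tlift_cong[OF vs_H vs_H U s])
    fix d e assume d: "d \<in> vcar H" and e: "e \<in> vcar H"
    have "tlift U K (tlift (tsp H H) (\<lambda>d' e'. tens H H (muH d d') (muH e e')) s')
        = tlift U (\<lambda>d' e'. tlift U K (tens H H (muH d d') (muH e e'))) s'"
      by (rule tlift_tlift[OF vs_H vs_H vs_H vs_H U K s']) (use d e in simp)
    also have "\<dots> = tlift U (\<lambda>d' e'. K (muH d d') (muH e e')) s'"
      by (rule tlift_cong[OF vs_H vs_H U s']) (use d e in \<open>simp add: tlift_tens[OF vs_H vs_H U K]\<close>)
    finally show "tlift U K (tlift (tsp H H) (\<lambda>d' e'. tens H H (muH d d') (muH e e')) s')
        = tlift U (\<lambda>d' e'. K (muH d d') (muH e e')) s'" .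
  qed
  finally show ?thesis .
qed

lemma tlift_coassoc:
  fixes U :: "('k, 'u) vs"
  assumes U: "is_vs U" and G: "trilinear_map H H H U G" and h: "h \<in> vcar H"
  shows "tlift U (\<lambda>x y. tlift U (\<lambda>p q. G p q (alH y)) (De x)) (De h)
       = tlift U (\<lambda>x y. tlift U (G (alH x)) (De y)) (De h)"
proof -
  have "tlift U (\<lambda>x y. tlift U (\<lambda>p q. G p q (alH y)) (De x)) (De h)
      = tlift U (\<lambda>s z. tlift U (\<lambda>p q. G p q z) s) (tmap (tsp H H) H De alH (De h))"
    by (rule tlift_tmap[OF vs_H vs_H vs_HH vs_H U trilinear_tlift_bil12[OF vs_H vs_H vs_H U G], symmetric])
       (use h in auto)
  also have "\<dots> = tlift U (\<lambda>x t. tlift U (G x) t) (tassoc H H H (tmap (tsp H H) H De alH (De h)))"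
    by (rule tlift_tassoc[OF vs_H vs_H vs_H U G, symmetric]) (rule tmap_closed[OF vs_H vs_H vs_HH vs_H]; use h in auto)
  also have "\<dots> = tlift U (\<lambda>x t. tlift U (G x) t) (tmap H (tsp H H) alH De (De h))"
    by (simp add: coassoc h)
  also have "\<dots> = tlift U (\<lambda>x y. tlift U (G (alH x)) (De y)) (De h)"
    by (rule tlift_tmap[OF vs_H vs_H vs_H vs_HH U trilinear_tlift_bil23[OF vs_H vs_H vs_H U G]]) (use h in auto)
  finally show ?thesis .
qed

abbreviation "D \<equiv> tsp A H"
abbreviation "mu \<equiv> smash_mult A H muA alA muH De alH act"
abbreviation "alD \<equiv> tmap A H alA alH"
abbreviation "rho \<equiv> smash_rho A H alA De"
abbreviation "DH \<equiv> tsp D H"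

lemma vs_D[simp]: "is_vs D" by (rule tsp_is_vs[OF vs_A vs_H])
lemma vs_DH[simp]: "is_vs DH" by (rule tsp_is_vs[OF vs_D vs_H])

definition prod_tens where
  "prod_tens a h a' h' = tlift D (\<lambda>x y. tens A H (muA a (act (iH (iH x)) (iA a'))) (muH (iH y) h')) (De h)"

lemma prod_tens_bil: "a \<in> vcar A \<Longrightarrow> h \<in> vcar H \<Longrightarrow> bilinear_map A H D (prod_tens a h)"
  unfolding prod_tens_def by (auto intro!: linear_intros closed_intros)

lemma smash_mult_eq: "mu t t' = tlift D (\<lambda>a h. tlift D (prod_tens a h) t') t"
  unfolding smash_mult_def Let_def prod_tens_def ..

lemma prod_tens_closed[simp]: "a \<in> vcar A \<Longrightarrow> h \<in> vcar H \<Longrightarrow> a' \<in> vcar A \<Longrightarrow> h' \<in> vcar H \<Longrightarrow> prod_tens a h a' h' \<in> vcar D"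
  unfolding prod_tens_def by (auto intro!: closed_intros)

lemma mult_left_bil: "t' \<in> vcar D \<Longrightarrow> bilinear_map A H D (\<lambda>a h. tlift D (prod_tens a h) t')"
  unfolding prod_tens_def by (auto intro!: linear_intros closed_intros)

lemma smash_mult_bil: "bilinear_map D D D mu"
  unfolding smash_mult_eq
proof (rule bilI)
  fix t' assume t': "t' \<in> vcar D"
  show "linear_map D D (\<lambda>t. tlift D (\<lambda>a h. tlift D (prod_tens a h) t') t)"
    by (rule tlift_lin[OF vs_A vs_H vs_D mult_left_bil[OF t']])
next
  fix t assume t: "t \<in> vcar D"
  show "linear_map D D (\<lambda>t'. tlift D (\<lambda>a h. tlift D (prod_tens a h) t') t)"
    by (rule linear_tlift_param[OF vs_A vs_H vs_D vs_D t]) (rule tlift_lin[OF vs_A vs_H vs_D prod_tens_bil])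
qed

lemma smash_mult_closed[simp]: "x \<in> vcar D \<Longrightarrow> y \<in> vcar D \<Longrightarrow> mu x y \<in> vcar D" by (rule bilD(1)[OF smash_mult_bil])

lemma smash_mult_tens: "a \<in> vcar A \<Longrightarrow> h \<in> vcar H \<Longrightarrow> a' \<in> vcar A \<Longrightarrow> h' \<in> vcar H \<Longrightarrow>
   mu (tens A H a h) (tens A H a' h') = prod_tens a h a' h'"
  unfolding smash_mult_eq
  by (simp add: tlift_tens[OF vs_A vs_H vs_D mult_left_bil] tlift_tens[OF vs_A vs_H vs_D prod_tens_bil])

lemma alD_lin: "linear_map D D alD" by (rule tmap_lin[OF vs_A vs_H vs_A vs_H alA_lin alH_lin])
lemma alD_closed[simp]: "x \<in> vcar D \<Longrightarrow> alD x \<in> vcar D" by (rule linD(1)[OF alD_lin])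
lemma alD_tens[simp]: "a \<in> vcar A \<Longrightarrow> h \<in> vcar H \<Longrightarrow> alD (tens A H a h) = tens A H (alA a) (alH h)"
  by (rule tmap_tens[OF vs_A vs_H vs_A vs_H alA_lin alH_lin])

definition coaction_tens where "coaction_tens a h = tlift DH (\<lambda>x y. tens D H (tens A H (alA a) x) y) (De h)"

lemma coaction_tens_bil: "bilinear_map A H DH coaction_tens"
  unfolding coaction_tens_def by (auto intro!: linear_intros closed_intros)

lemma rho_eq: "rho t = tlift DH coaction_tens t"
  unfolding smash_rho_def coaction_tens_def ..

lemma rho_lin: "linear_map D DH rho" unfolding rho_eq by (rule tlift_lin[OF vs_A vs_H vs_DH coaction_tens_bil])
lemma rho_closed[simp]: "x \<in> vcar D \<Longrightarrow> rho x \<in> vcar DH" by (rule linD(1)[OF rho_lin])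
lemma rho_tens: "a \<in> vcar A \<Longrightarrow> h \<in> vcar H \<Longrightarrow> rho (tens A H a h) = coaction_tens a h"
  unfolding rho_eq by (rule tlift_tens[OF vs_A vs_H vs_DH coaction_tens_bil])

lemmas lin_mult1 = lin_bil_comp1[OF smash_mult_bil] and lin_mult2 = lin_bil_comp2[OF smash_mult_bil]
lemmas lin_alD = lin_comp[OF _ alD_lin] and lin_rho = lin_comp[OF _ rho_lin]
lemmas linear_intros' = linear_intros lin_mult1 lin_mult2 lin_alD lin_rho
lemmas closed_intros' = closed_intros smash_mult_closed alD_closed rho_closed vs_D vs_DH vs_HH prod_tens_closed

lemma alD_prod_tens:
  assumes a: "a \<in> vcar A" and h: "h \<in> vcar H" and a': "a' \<in> vcar A" and h': "h' \<in> vcar H"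
  shows "alD (prod_tens a h a' h') = prod_tens (alA a) (alH h) (alA a') (alH h')"
proof -
  have "alD (prod_tens a h a' h') = tlift D (\<lambda>x y. alD (tens A H (muA a (act (iH (iH x)) (iA a'))) (muH (iH y) h'))) (De h)"
    unfolding prod_tens_def by (rule tlift_map[OF vs_H vs_H vs_D vs_D alD_lin]) (use a h a' h' in \<open>auto intro!: closed_intros\<close>)
  also have "\<dots> = tlift D (\<lambda>x y. tens A H (muA (alA a) (act (iH x) a')) (muH y (alH h'))) (De h)"
    by (rule tlift_cong[OF vs_H vs_H vs_D]) (use a h a' h' in simp_all)
  also have "\<dots> = tlift D (\<lambda>x y. tens A H (muA (alA a) (act (iH (iH (alH x))) (iA (alA a')))) (muH (iH (alH y)) (alH h'))) (De h)"
    by (rule tlift_cong[OF vs_H vs_H vs_D]) (use a h a' h' in simp_all)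
  also have "\<dots> = tlift D (\<lambda>x y. tens A H (muA (alA a) (act (iH (iH x)) (iA (alA a')))) (muH (iH y) (alH h'))) (De (alH h))"
    by (rule tlift_De_alH[symmetric]) (use a h a' h' in \<open>auto intro!: linear_intros closed_intros\<close>)
  also have "\<dots> = prod_tens (alA a) (alH h) (alA a') (alH h')" unfolding prod_tens_def ..
  finally show ?thesis .
qed

lemma alD_mult: "x \<in> vcar D \<Longrightarrow> y \<in> vcar D \<Longrightarrow> alD (mu x y) = mu (alD x) (alD y)"
  by (rule tsp_ext2[OF vs_A vs_H vs_A vs_H vs_D, where F="\<lambda>x y. alD (mu x y)" and G="\<lambda>x y. mu (alD x) (alD y)"])
     (auto intro!: linear_intros' closed_intros' simp: smash_mult_tens alD_prod_tens)

subsection \<open>Hom-associativity\<close>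

lemma act_iH_muA:
  assumes u: "u \<in> vcar H" and c: "c \<in> vcar A" and d: "d \<in> vcar A"
  shows "act (iH u) (muA c d) = tlift A (\<lambda>p q. muA (act (iH (iH (iH p))) c) (act (iH (iH (iH q))) d)) (De u)"
proof -
  have "act (iH u) (muA c d) = act (alH (alH (iH (iH (iH u))))) (muA c d)" using u by simp
  also have "\<dots> = tlift A (\<lambda>p q. muA (act p c) (act q d)) (De (iH (iH (iH u))))"
    by (rule act_mu) (use u c d in simp_all)
  also have "\<dots> = tlift A (\<lambda>p q. muA (act (iH p) c) (act (iH q) d)) (De (iH (iH u)))"
    by (rule tlift_De_iH) (use u c d in \<open>auto intro!: linear_intros closed_intros\<close>)
  also have "\<dots> = tlift A (\<lambda>p q. muA (act (iH (iH p)) c) (act (iH (iH q)) d)) (De (iH u))"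
    by (rule tlift_De_iH) (use u c d in \<open>auto intro!: linear_intros closed_intros\<close>)
  also have "\<dots> = tlift A (\<lambda>p q. muA (act (iH (iH (iH p))) c) (act (iH (iH (iH q))) d)) (De u)"
    by (rule tlift_De_iH) (use u c d in \<open>auto intro!: linear_intros closed_intros\<close>)
  finally show ?thesis .
qed

lemma act_iH_act: "k \<in> vcar H \<Longrightarrow> k' \<in> vcar H \<Longrightarrow> c \<in> vcar A \<Longrightarrow>
   act (iH k) (act k' c) = act (muH (iH (iH k)) k') (alA c)"
  using act_act[of "iH (iH k)" k' c] by simp

lemma muH_assoc_iH: "v \<in> vcar H \<Longrightarrow> y \<in> vcar H \<Longrightarrow> z \<in> vcar H \<Longrightarrow>
   muH v (muH y z) = muH (muH (iH v) y) (alH z)"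
  using hom_assocH[of "iH v" y z] by simp

context
  fixes a h a' h' a'' h''
  assumes a: "a \<in> vcar A" and h: "h \<in> vcar H" and a': "a' \<in> vcar A" and h': "h' \<in> vcar H"
    and a'': "a'' \<in> vcar A" and h'': "h'' \<in> vcar H"
begin

definition assoc_term where
  "assoc_term P Q R = tlift D (\<lambda>x y. tens A H (muA (muA a (act (iH (iH (iH P))) (iA a'))) (act (muH (iH (iH (iH Q))) (iH (iH x))) a''))
      (muH (muH (iH (iH R)) (iH y)) (alH h''))) (De h')"

lemma assoc_term_trilinear: "trilinear_map H H H D assoc_term"
  unfolding assoc_term_def using a h a' h' a'' h'' by (auto intro!: trilinearI linear_intros closed_intros)

lemma assoc_lhs_summand:
  assumes p: "p \<in> vcar H" and q: "q \<in> vcar H" and v: "v \<in> vcar H" and x: "x \<in> vcar H" and y: "y \<in> vcar H"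
  shows "tens A H (muA (alA a) (muA (act (iH (iH (iH p))) (iA a')) (act (iH (iH (iH q))) (act (iH (iH (iH x))) (iA (iA a''))))))
        (muH v (muH (iH y) h''))
    = tens A H (muA (muA a (act (iH (iH (iH p))) (iA a'))) (act (muH (iH (iH (iH q))) (iH (iH x))) a''))
      (muH (muH (iH v) (iH y)) (alH h''))"
proof -
  let ?c = "iA a'" and ?d = "act (iH (iH (iH x))) (iA (iA a''))"
  have e1: "muA (alA a) (muA (act (iH (iH (iH p))) ?c) (act (iH (iH (iH q))) ?d))
     = muA (muA a (act (iH (iH (iH p))) ?c)) (alA (act (iH (iH (iH q))) ?d))"
    by (rule hom_assocA) (use p q a a' a'' x in simp_all)
  have e2: "alA (act (iH (iH (iH q))) ?d) = act (muH (iH (iH (iH q))) (iH (iH x))) a''"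
  proof -
    have "alA (act (iH (iH (iH q))) ?d) = act (iH (iH q)) (act (iH (iH x)) (iA a''))"
      using q x a'' by simp
    also have "\<dots> = act (muH (iH (iH (iH q))) (iH (iH x))) (alA (iA a''))"
      by (rule act_iH_act) (use q x a'' in simp_all)
    finally show ?thesis using a'' by simp
  qed
  have e3: "muH v (muH (iH y) h'') = muH (muH (iH v) (iH y)) (alH h'')"
    by (rule muH_assoc_iH) (use v y h'' in simp_all)
  show ?thesis unfolding e1 e2 e3 ..
qed

lemma tens_muA_tlift:
  assumes t: "t \<in> vcar (tsp H H)" and a0: "a0 \<in> vcar A" and w: "w \<in> vcar H"
    and F: "\<And>p q. p \<in> vcar H \<Longrightarrow> q \<in> vcar H \<Longrightarrow> F p q \<in> vcar A"
  shows "tens A H (muA a0 (tlift A F t)) w = tlift D (\<lambda>p q. tens A H (muA a0 (F p q)) w) t"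
  by (rule tlift_map[OF vs_H vs_H vs_A vs_D, where L="\<lambda>z. tens A H (muA a0 z) w"])
     (use t a0 w F in \<open>auto intro!: linear_intros closed_intros\<close>)

lemma assoc_lhs_inner:
  assumes x: "x \<in> vcar H" and y: "y \<in> vcar H"
  shows "prod_tens (alA a) (alH h) (muA a' (act (iH (iH x)) (iA a''))) (muH (iH y) h'')
    = tlift D (\<lambda>u v. tlift D (\<lambda>p q. tens A H (muA (muA a (act (iH (iH (iH p))) (iA a'))) (act (muH (iH (iH (iH q))) (iH (iH x))) a''))
      (muH (muH (iH v) (iH y)) (alH h''))) (De u)) (De h)"
proof -
  let ?c = "iA a'" and ?d = "act (iH (iH (iH x))) (iA (iA a''))"
  have "prod_tens (alA a) (alH h) (muA a' (act (iH (iH x)) (iA a''))) (muH (iH y) h'')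
     = tlift D (\<lambda>u v. tens A H (muA (alA a) (act (iH (iH (alH u))) (iA (muA a' (act (iH (iH x)) (iA a''))))))
           (muH (iH (alH v)) (muH (iH y) h''))) (De h)"
    unfolding prod_tens_def by (rule tlift_De_alH) (use a h a' h' a'' h'' x y in \<open>auto intro!: linear_intros closed_intros\<close>)
  also have "\<dots> = tlift D (\<lambda>u v. tens A H (muA (alA a) (act (iH u) (muA ?c ?d))) (muH v (muH (iH y) h''))) (De h)"
    by (rule tlift_cong[OF vs_H vs_H vs_D]) (use a h a' h' a'' h'' x y in simp_all)
  also have "\<dots> = tlift D (\<lambda>u v. tens A H (muA (alA a) (tlift A (\<lambda>p q. muA (act (iH (iH (iH p))) ?c) (act (iH (iH (iH q))) ?d)) (De u)))
        (muH v (muH (iH y) h''))) (De h)"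
    by (rule tlift_cong[OF vs_H vs_H vs_D]) (use a h a' h' a'' h'' x y in \<open>simp_all add: act_iH_muA\<close>)
  also have "\<dots> = tlift D (\<lambda>u v. tlift D (\<lambda>p q. tens A H (muA (alA a) (muA (act (iH (iH (iH p))) ?c) (act (iH (iH (iH q))) ?d)))
        (muH v (muH (iH y) h''))) (De u)) (De h)"
    by (rule tlift_cong[OF vs_H vs_H vs_D]) (use a h a' h' a'' h'' x y in \<open>simp_all add: tens_muA_tlift\<close>)
  also have "\<dots> = tlift D (\<lambda>u v. tlift D (\<lambda>p q. tens A H (muA (muA a (act (iH (iH (iH p))) (iA a'))) (act (muH (iH (iH (iH q))) (iH (iH x))) a''))
      (muH (muH (iH v) (iH y)) (alH h''))) (De u)) (De h)"
    by (intro tlift_cong[OF vs_H vs_H vs_D]) (use h x y in \<open>simp_all add: assoc_lhs_summand\<close>)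
  finally show ?thesis .
qed

lemma assoc_lhs:
  "mu (tens A H (alA a) (alH h)) (prod_tens a' h' a'' h'') = tlift D (\<lambda>u v. tlift D (\<lambda>p q. assoc_term p q (alH v)) (De u)) (De h)"
proof -
  let ?T = "\<lambda>p q v x y. tens A H (muA (muA a (act (iH (iH (iH p))) (iA a'))) (act (muH (iH (iH (iH q))) (iH (iH x))) a''))
      (muH (muH (iH v) (iH y)) (alH h''))"
  have "mu (tens A H (alA a) (alH h)) (prod_tens a' h' a'' h'')
     = tlift D (\<lambda>x y. mu (tens A H (alA a) (alH h)) (tens A H (muA a' (act (iH (iH x)) (iA a''))) (muH (iH y) h''))) (De h')"
    unfolding prod_tens_def
    by (rule tlift_map[OF vs_H vs_H vs_D vs_D bil_lin2[OF smash_mult_bil]]) (use a h a' h' a'' h'' in \<open>auto intro!: closed_intros\<close>)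
  also have "\<dots> = tlift D (\<lambda>x y. prod_tens (alA a) (alH h) (muA a' (act (iH (iH x)) (iA a''))) (muH (iH y) h'')) (De h')"
    by (rule tlift_cong[OF vs_H vs_H vs_D]) (use a h a' h' a'' h'' in \<open>simp_all add: smash_mult_tens\<close>)
  also have "\<dots> = tlift D (\<lambda>x y. tlift D (\<lambda>u v. tlift D (\<lambda>p q. ?T p q v x y) (De u)) (De h)) (De h')"
    by (rule tlift_cong[OF vs_H vs_H vs_D]) (use h' in \<open>simp_all add: assoc_lhs_inner\<close>)
  also have "\<dots> = tlift D (\<lambda>u v. tlift D (\<lambda>x y. tlift D (\<lambda>p q. ?T p q v x y) (De u)) (De h')) (De h)"
    by (rule tlift_swap[OF vs_H vs_H vs_H vs_H vs_D]) (use a h a' h' a'' h'' in \<open>auto intro!: closed_intros\<close>)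
  also have "\<dots> = tlift D (\<lambda>u v. tlift D (\<lambda>p q. tlift D (\<lambda>x y. ?T p q v x y) (De h')) (De u)) (De h)"
  proof (rule tlift_cong[OF vs_H vs_H vs_D], goal_cases)
    case (2 u v)
    show ?case
      by (rule tlift_swap[OF vs_H vs_H vs_H vs_H vs_D]) (use 2 a h a' h' a'' h'' in \<open>auto intro!: closed_intros\<close>)
  qed (use h in simp)
  also have "\<dots> = tlift D (\<lambda>u v. tlift D (\<lambda>p q. assoc_term p q (alH v)) (De u)) (De h)"
    by (intro tlift_cong[OF vs_H vs_H vs_D]) (use h in \<open>simp_all add: assoc_term_def\<close>)
  finally show ?thesis .
qed

lemma assoc_rhs_inner:
  assumes u: "u \<in> vcar H" and v: "v \<in> vcar H"
  shows "prod_tens (muA a (act (iH (iH u)) (iA a'))) (muH (iH v) h') (alA a'') (alH h'')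
     = tlift D (\<lambda>d e. assoc_term (alH u) d e) (De v)"
proof -
  let ?A1 = "muA a (act (iH (iH u)) (iA a'))"
  let ?K = "\<lambda>s r. tens A H (muA ?A1 (act (iH (iH s)) (iA (alA a'')))) (muH (iH r) (alH h''))"
  have K: "bilinear_map H H D ?K" using a a' a'' h'' u by (auto intro!: linear_intros closed_intros)
  have "prod_tens ?A1 (muH (iH v) h') (alA a'') (alH h'') = tlift D ?K (tmul H H muH muH (De (iH v)) (De h'))"
    unfolding prod_tens_def using v h' by (simp add: De_mu)
  also have "\<dots> = tlift D (\<lambda>d e. tlift D (\<lambda>d' e'. ?K (muH d d') (muH e e')) (De h')) (De (iH v))"
    by (rule tlift_tmul[OF vs_D K]) (use v h' in simp_all)
  also have "\<dots> = tlift D (\<lambda>d e. tlift D (\<lambda>d' e'. ?K (muH (iH d) d') (muH (iH e) e')) (De h')) (De v)"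
    by (rule tlift_De_iH[OF vs_D _ v]) (use a a' a'' h' h'' u in \<open>auto intro!: linear_intros closed_intros\<close>)
  also have "\<dots> = tlift D (\<lambda>d e. assoc_term (alH u) d e) (De v)"
    unfolding assoc_term_def by (intro tlift_cong[OF vs_H vs_H vs_D]) (use a a' a'' h' h'' u v in simp_all)
  finally show ?thesis .
qed

lemma assoc_rhs:
  "mu (prod_tens a h a' h') (tens A H (alA a'') (alH h'')) = tlift D (\<lambda>u v. tlift D (\<lambda>d e. assoc_term (alH u) d e) (De v)) (De h)"
proof -
  have "mu (prod_tens a h a' h') (tens A H (alA a'') (alH h''))
     = tlift D (\<lambda>u v. mu (tens A H (muA a (act (iH (iH u)) (iA a'))) (muH (iH v) h')) (tens A H (alA a'') (alH h''))) (De h)"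
    unfolding prod_tens_def
    by (rule tlift_map[OF vs_H vs_H vs_D vs_D bil_lin1[OF smash_mult_bil]]) (use a h a' h' a'' h'' in \<open>auto intro!: closed_intros\<close>)
  also have "\<dots> = tlift D (\<lambda>u v. prod_tens (muA a (act (iH (iH u)) (iA a'))) (muH (iH v) h') (alA a'') (alH h'')) (De h)"
    by (rule tlift_cong[OF vs_H vs_H vs_D]) (use a h a' h' a'' h'' in \<open>simp_all add: smash_mult_tens\<close>)
  also have "\<dots> = tlift D (\<lambda>u v. tlift D (\<lambda>d e. assoc_term (alH u) d e) (De v)) (De h)"
    by (rule tlift_cong[OF vs_H vs_H vs_D]) (use h in \<open>simp_all add: assoc_rhs_inner\<close>)
  finally show ?thesis .
qed

lemma hom_assoc_tens:
  "mu (alD (tens A H a h)) (mu (tens A H a' h') (tens A H a'' h'')) = mu (mu (tens A H a h) (tens A H a' h')) (alD (tens A H a'' h''))"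
proof -
  have "mu (alD (tens A H a h)) (mu (tens A H a' h') (tens A H a'' h'')) = mu (tens A H (alA a) (alH h)) (prod_tens a' h' a'' h'')"
    using a h a' h' a'' h'' by (simp add: smash_mult_tens)
  also have "\<dots> = tlift D (\<lambda>u v. tlift D (\<lambda>p q. assoc_term p q (alH v)) (De u)) (De h)" by (rule assoc_lhs)
  also have "\<dots> = tlift D (\<lambda>u v. tlift D (\<lambda>d e. assoc_term (alH u) d e) (De v)) (De h)"
    by (rule tlift_coassoc[OF vs_D assoc_term_trilinear h])
  also have "\<dots> = mu (prod_tens a h a' h') (tens A H (alA a'') (alH h''))" by (rule assoc_rhs[symmetric])
  also have "\<dots> = mu (mu (tens A H a h) (tens A H a' h')) (alD (tens A H a'' h''))"
    using a h a' h' a'' h'' by (simp add: smash_mult_tens)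
  finally show ?thesis .
qed

end

lemma smash_hom_assoc_law: "x \<in> vcar D \<Longrightarrow> y \<in> vcar D \<Longrightarrow> z \<in> vcar D \<Longrightarrow> mu (alD x) (mu y z) = mu (mu x y) (alD z)"
  by (rule tsp_ext3[OF vs_A vs_H vs_D, where F="\<lambda>x y z. mu (alD x) (mu y z)" and G="\<lambda>x y z. mu (mu x y) (alD z)"])
     (auto intro!: trilinearI linear_intros' closed_intros' simp del: alD_tens simp: hom_assoc_tens)

lemma smash_hom_assoc: "hom_assoc D mu alD"
  unfolding hom_assoc_def using smash_mult_bil alD_lin alD_mult smash_hom_assoc_law by auto

subsection \<open>The coaction\<close>

lemma coaction_tens_closed[simp]: "a \<in> vcar A \<Longrightarrow> h \<in> vcar H \<Longrightarrow> coaction_tens a h \<in> vcar DH"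
  by (rule bilD(1)[OF coaction_tens_bil])

lemma rho_alD: "m \<in> vcar D \<Longrightarrow> tmap D H alD alH (rho m) = rho (alD m)"
proof (rule tsp_ext[OF vs_A vs_H vs_DH, where g="\<lambda>m. tmap D H alD alH (rho m)" and g'="\<lambda>m. rho (alD m)"])
  show "linear_map D DH (\<lambda>m. tmap D H alD alH (rho m))"
    by (rule lin_comp[OF rho_lin tmap_lin[OF vs_D vs_H vs_D vs_H alD_lin alH_lin]])
  show "linear_map D DH (\<lambda>m. rho (alD m))" by (rule lin_comp[OF alD_lin rho_lin])
next
  fix a h assume a: "a \<in> vcar A" and h: "h \<in> vcar H"
  have "tmap D H alD alH (rho (tens A H a h)) = tmap D H alD alH (tlift DH (\<lambda>x y. tens D H (tens A H (alA a) x) y) (De h))"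
    using a h by (simp add: rho_tens coaction_tens_def)
  also have "\<dots> = tlift DH (\<lambda>x y. tmap D H alD alH (tens D H (tens A H (alA a) x) y)) (De h)"
    by (rule tlift_map[OF vs_H vs_H vs_DH vs_DH tmap_lin[OF vs_D vs_H vs_D vs_H alD_lin alH_lin]]) (use a h in \<open>auto intro!: closed_intros'\<close>)
  also have "\<dots> = tlift DH (\<lambda>x y. tens D H (tens A H (alA (alA a)) (alH x)) (alH y)) (De h)"
    by (rule tlift_cong[OF vs_H vs_H vs_DH]) (use a h in \<open>simp_all add: tmap_tens[OF vs_D vs_H vs_D vs_H alD_lin alH_lin]\<close>)
  also have "\<dots> = tlift DH (\<lambda>x y. tens D H (tens A H (alA (alA a)) x) y) (De (alH h))"
    by (rule tlift_De_alH[symmetric]) (use a h in \<open>auto intro!: linear_intros' closed_intros'\<close>)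
  also have "\<dots> = rho (alD (tens A H a h))" using a h by (simp add: rho_tens coaction_tens_def)
  finally show "tmap D H alD alH (rho (tens A H a h)) = rho (alD (tens A H a h))" .
qed

abbreviation "D_HH \<equiv> tsp D (tsp H H)"
lemma vs_D_HH[simp]: "is_vs D_HH" by (rule tsp_is_vs[OF vs_D vs_HH])
lemma vs_DH_H[simp]: "is_vs (tsp DH H)" by (rule tsp_is_vs[OF vs_DH vs_H])

context
  fixes a assumes a: "a \<in> vcar A"
begin

definition coassoc_term where
  "coassoc_term p q r = tens D (tsp H H) (tens A H (alA (alA a)) p) (tens H H q r)"

lemma coassoc_term_trilinear: "trilinear_map H H H D_HH coassoc_term"
  unfolding coassoc_term_def using a by (auto intro!: trilinearI linear_intros' closed_intros')

lemma rho_coassoc_lhs: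
  assumes h: "h \<in> vcar H"
  shows "tmap D (tsp H H) alD De (rho (tens A H a h))
    = tlift D_HH (\<lambda>x y. tlift D_HH (coassoc_term (alH x)) (De y)) (De h)"
proof -
  have "tmap D (tsp H H) alD De (rho (tens A H a h))
     = tlift D_HH (\<lambda>x y. tmap D (tsp H H) alD De (tens D H (tens A H (alA a) x) y)) (De h)"
    unfolding rho_tens[OF a h] coaction_tens_def
    by (rule tlift_map[OF vs_H vs_H vs_DH vs_D_HH tmap_lin[OF vs_D vs_H vs_D vs_HH alD_lin De_lin]])
       (use a h in \<open>auto intro!: closed_intros'\<close>)
  also have "\<dots> = tlift D_HH (\<lambda>x y. tens D (tsp H H) (tens A H (alA (alA a)) (alH x)) (De y)) (De h)"
    by (rule tlift_cong[OF vs_H vs_H vs_D_HH]) (use a h in \<open>simp_all add: tmap_tens[OF vs_D vs_H vs_D vs_HH alD_lin De_lin]\<close>)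
  also have "\<dots> = tlift D_HH (\<lambda>x y. tlift D_HH (coassoc_term (alH x)) (De y)) (De h)"
    unfolding coassoc_term_def
    by (rule tlift_cong[OF vs_H vs_H vs_D_HH]) (use a h in \<open>simp_all add: tens_tlift_expand[OF vs_D vs_H vs_H]\<close>)
  finally show ?thesis .
qed

lemma rho_coassoc_rhs:
  assumes h: "h \<in> vcar H"
  shows "tassoc D H H (tmap DH H rho alH (rho (tens A H a h)))
    = tlift D_HH (\<lambda>x y. tlift D_HH (\<lambda>p q. coassoc_term p q (alH y)) (De x)) (De h)"
proof -
  have "tmap DH H rho alH (rho (tens A H a h))
      = tlift (tsp DH H) (\<lambda>x y. tmap DH H rho alH (tens D H (tens A H (alA a) x) y)) (De h)"
    unfolding rho_tens[OF a h] coaction_tens_def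
    by (rule tlift_map[OF vs_H vs_H vs_DH vs_DH_H tmap_lin[OF vs_D vs_H vs_DH vs_H rho_lin alH_lin]])
       (use a h in \<open>auto intro!: closed_intros'\<close>)
  also have "\<dots> = tlift (tsp DH H) (\<lambda>x y. tens DH H (coaction_tens (alA a) x) (alH y)) (De h)"
    by (rule tlift_cong[OF vs_H vs_H vs_DH_H])
       (use a h in \<open>simp_all add: tmap_tens[OF vs_D vs_H vs_DH vs_H rho_lin alH_lin] rho_tens\<close>)
  finally have "tassoc D H H (tmap DH H rho alH (rho (tens A H a h)))
      = tlift D_HH (\<lambda>x y. tassoc D H H (tens DH H (coaction_tens (alA a) x) (alH y))) (De h)"
    using tlift_map[OF vs_H vs_H vs_DH_H vs_D_HH tassoc_lin[OF vs_D vs_H vs_H]] a h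
    by (simp add: coaction_tens_closed)
  also have "\<dots> = tlift D_HH (\<lambda>x y. tlift D_HH (\<lambda>p q. coassoc_term p q (alH y)) (De x)) (De h)"
  proof (rule tlift_cong[OF vs_H vs_H vs_D_HH De_closed[OF h]])
    fix x y assume x: "x \<in> vcar H" and y: "y \<in> vcar H"
    have "tassoc D H H (tens DH H (coaction_tens (alA a) x) (alH y))
       = tlift D_HH (\<lambda>u v. tens D (tsp H H) u (tens H H v (alH y))) (coaction_tens (alA a) x)"
      by (rule tassoc_tens[OF vs_D vs_H vs_H]) (use x y a in simp_all)
    also have "\<dots> = tlift D_HH (\<lambda>p q. tlift D_HH (\<lambda>u v. tens D (tsp H H) u (tens H H v (alH y)))
        (tens D H (tens A H (alA (alA a)) p) q)) (De x)"
      unfolding coaction_tens_def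
      by (rule tlift_tlift[OF vs_H vs_H vs_D vs_H vs_D_HH]) (use x y a in \<open>auto intro!: linear_intros' closed_intros'\<close>)
    also have "\<dots> = tlift D_HH (\<lambda>p q. coassoc_term p q (alH y)) (De x)"
      unfolding coassoc_term_def
      by (rule tlift_cong[OF vs_H vs_H vs_D_HH De_closed[OF x]], rule tlift_tens[OF vs_D vs_H vs_D_HH])
         (use x y a in \<open>auto intro!: linear_intros' closed_intros'\<close>)
    finally show "tassoc D H H (tens DH H (coaction_tens (alA a) x) (alH y))
       = tlift D_HH (\<lambda>p q. coassoc_term p q (alH y)) (De x)" .
  qed
  finally show ?thesis .
qed

end

lemma rho_coassoc: "m \<in> vcar D \<Longrightarrow> tmap D (tsp H H) alD De (rho m) = tassoc D H H (tmap DH H rho alH (rho m))"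
proof (rule tsp_ext[OF vs_A vs_H vs_D_HH])
  show "linear_map D D_HH (\<lambda>m. tmap D (tsp H H) alD De (rho m))"
    by (rule lin_comp[OF rho_lin tmap_lin[OF vs_D vs_H vs_D vs_HH alD_lin De_lin]])
  show "linear_map D D_HH (\<lambda>m. tassoc D H H (tmap DH H rho alH (rho m)))"
    by (rule lin_comp[OF lin_comp[OF rho_lin tmap_lin[OF vs_D vs_H vs_DH vs_H rho_lin alH_lin]]
          tassoc_lin[OF vs_D vs_H vs_H]])
  show "tmap D (tsp H H) alD De (rho (tens A H a h)) = tassoc D H H (tmap DH H rho alH (rho (tens A H a h)))"
    if "a \<in> vcar A" "h \<in> vcar H" for a h
    using that by (simp add: rho_coassoc_lhs rho_coassoc_rhs tlift_coassoc[OF vs_D_HH coassoc_term_trilinear])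
qed

context
  fixes a h a' h'
  assumes a: "a \<in> vcar A" and h: "h \<in> vcar H" and a': "a' \<in> vcar A" and h': "h' \<in> vcar H"
begin

definition coaction_term where
  "coaction_term P Q R = tlift DH (\<lambda>x' y'. tens D H (tens A H (muA (alA a) (act (iH (iH P)) a')) (muH (iH Q) x')) (muH (iH R) y')) (De h')"

lemma coaction_term_trilinear: "trilinear_map H H H DH coaction_term"
  unfolding coaction_term_def using a h a' h' by (auto intro!: trilinearI linear_intros' closed_intros')

lemma rho_mult_lhs:
  "rho (mu (tens A H a h) (tens A H a' h')) = tlift DH (\<lambda>x y. tlift DH (\<lambda>d e. coaction_term (alH x) d e) (De y)) (De h)"
proof -
  have "rho (mu (tens A H a h) (tens A H a' h'))
     = tlift DH (\<lambda>x y. rho (tens A H (muA a (act (iH (iH x)) (iA a'))) (muH (iH y) h'))) (De h)"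
    unfolding smash_mult_tens[OF a h a' h'] prod_tens_def
    by (rule tlift_map[OF vs_H vs_H vs_D vs_DH rho_lin]) (use a h a' h' in \<open>auto intro!: closed_intros'\<close>)
  also have "\<dots> = tlift DH (\<lambda>x y. tlift DH (\<lambda>d e. coaction_term (alH x) d e) (De y)) (De h)"
  proof (rule tlift_cong[OF vs_H vs_H vs_DH], goal_cases)
    case (2 x y)
    let ?K = "\<lambda>s r. tens D H (tens A H (alA (muA a (act (iH (iH x)) (iA a')))) s) r"
    have K: "bilinear_map H H DH ?K" using 2 a a' by (auto intro!: linear_intros' closed_intros')
    have "rho (tens A H (muA a (act (iH (iH x)) (iA a'))) (muH (iH y) h'))
       = tlift DH ?K (tmul H H muH muH (De (iH y)) (De h'))"
      using 2 a a' h' by (simp add: rho_tens coaction_tens_def De_mu)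
    also have "\<dots> = tlift DH (\<lambda>d e. tlift DH (\<lambda>d' e'. ?K (muH d d') (muH e e')) (De h')) (De (iH y))"
      by (rule tlift_tmul[OF vs_DH K]) (use 2 h' in simp_all)
    also have "\<dots> = tlift DH (\<lambda>d e. tlift DH (\<lambda>d' e'. ?K (muH (iH d) d') (muH (iH e) e')) (De h')) (De y)"
      by (rule tlift_De_iH[OF vs_DH]) (use 2 a a' h' in \<open>auto intro!: linear_intros' closed_intros'\<close>)
    also have "\<dots> = tlift DH (\<lambda>d e. coaction_term (alH x) d e) (De y)"
      unfolding coaction_term_def by (intro tlift_cong[OF vs_H vs_H vs_DH]) (use 2 a a' h' in simp_all)
    finally show ?case .
  qed (use h in simp)
  finally show ?thesis .
qed

lemma rho_mult_rhs:
  "tmul D H mu muH (rho (tens A H a h)) (rho (tens A H a' h')) = tlift DH (\<lambda>x y. tlift DH (\<lambda>p q. coaction_term p q (alH y)) (De x)) (De h)"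
proof -
  let ?Phi = "\<lambda>d e. tlift DH (\<lambda>d' e'. tens D H (mu d d') (muH e e')) (coaction_tens a' h')"
  have Phi: "bilinear_map D H DH ?Phi" using a' h' by (auto intro!: linear_intros' closed_intros')
  have "tmul D H mu muH (rho (tens A H a h)) (rho (tens A H a' h')) = tlift DH ?Phi (tlift DH (\<lambda>x y. tens D H (tens A H (alA a) x) y) (De h))"
    using a h a' h' by (simp add: tmul_def rho_tens coaction_tens_def[of a h])
  also have "\<dots> = tlift DH (\<lambda>x y. tlift DH ?Phi (tens D H (tens A H (alA a) x) y)) (De h)"
    by (rule tlift_tlift[OF vs_H vs_H vs_D vs_H vs_DH Phi]) (use a h in \<open>auto intro!: closed_intros'\<close>)
  also have "\<dots> = tlift DH (\<lambda>x y. ?Phi (tens A H (alA a) x) y) (De h)"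
    by (rule tlift_cong[OF vs_H vs_H vs_DH]) (use a h in \<open>simp_all add: tlift_tens[OF vs_D vs_H vs_DH Phi]\<close>)
  also have "\<dots> = tlift DH (\<lambda>x y. tlift DH (\<lambda>p q. coaction_term p q (alH y)) (De x)) (De h)"
  proof (rule tlift_cong[OF vs_H vs_H vs_DH], goal_cases)
    case (2 x y)
    let ?Psi = "\<lambda>d' e'. tens D H (mu (tens A H (alA a) x) d') (muH y e')"
    have Psi: "bilinear_map D H DH ?Psi" using 2 a by (auto intro!: linear_intros' closed_intros')
    have "?Phi (tens A H (alA a) x) y = tlift DH ?Psi (tlift DH (\<lambda>x' y'. tens D H (tens A H (alA a') x') y') (De h'))"
      by (simp add: coaction_tens_def)
    also have "\<dots> = tlift DH (\<lambda>x' y'. tlift DH ?Psi (tens D H (tens A H (alA a') x') y')) (De h')"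
      by (rule tlift_tlift[OF vs_H vs_H vs_D vs_H vs_DH Psi]) (use a' h' in \<open>auto intro!: closed_intros'\<close>)
    also have "\<dots> = tlift DH (\<lambda>x' y'. tens D H (prod_tens (alA a) x (alA a') x') (muH y y')) (De h')"
      by (rule tlift_cong[OF vs_H vs_H vs_DH]) (use 2 a a' h' in \<open>simp_all add: tlift_tens[OF vs_D vs_H vs_DH Psi] smash_mult_tens\<close>)
    also have "\<dots> = tlift DH (\<lambda>x' y'. tlift DH (\<lambda>p q. tens D H (tens A H (muA (alA a) (act (iH (iH p)) (iA (alA a')))) (muH (iH q) x')) (muH y y')) (De x)) (De h')"
    proof (rule tlift_cong[OF vs_H vs_H vs_DH], goal_cases)
      case (2 x' y')
      show ?case unfolding prod_tens_def
        by (rule tlift_map[OF vs_H vs_H vs_D vs_DH, where L="\<lambda>z. tens D H z (muH y y')"])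
           (use 2 `x \<in> vcar H` `y \<in> vcar H` a a' in \<open>auto intro!: linear_intros' closed_intros'\<close>)
    qed (use h' in simp)
    also have "\<dots> = tlift DH (\<lambda>p q. tlift DH (\<lambda>x' y'. tens D H (tens A H (muA (alA a) (act (iH (iH p)) (iA (alA a')))) (muH (iH q) x')) (muH y y')) (De h')) (De x)"
      by (rule tlift_swap[OF vs_H vs_H vs_H vs_H vs_DH]) (use 2 a a' h' in \<open>auto intro!: closed_intros'\<close>)
    also have "\<dots> = tlift DH (\<lambda>p q. coaction_term p q (alH y)) (De x)"
      unfolding coaction_term_def by (intro tlift_cong[OF vs_H vs_H vs_DH]) (use 2 a a' h' in simp_all)
    finally show ?case .
  qed (use h in simp)
  finally show ?thesis .
qed

lemma rho_mult_tens:
  "rho (mu (tens A H a h) (tens A H a' h')) = tmul D H mu muH (rho (tens A H a h)) (rho (tens A H a' h'))"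
  unfolding rho_mult_lhs rho_mult_rhs by (rule tlift_coassoc[OF vs_DH coaction_term_trilinear h, symmetric])

end

lemma rho_mult: "x \<in> vcar D \<Longrightarrow> y \<in> vcar D \<Longrightarrow> rho (mu x y) = tmul D H mu muH (rho x) (rho y)"
  by (rule tsp_ext2[OF vs_A vs_H vs_A vs_H vs_DH, where F="\<lambda>x y. rho (mu x y)" and G="\<lambda>x y. tmul D H mu muH (rho x) (rho y)"])
     (auto intro!: linear_intros' closed_intros' simp: tmul_def[symmetric] rho_mult_tens, auto intro!: linear_intros' closed_intros' simp: tmul_def)

end

theorem proposition3p6:
  fixes H :: "('k::field, 'h) vs" and A :: "('k, 'a) vs"
    and muH :: "'h \<Rightarrow> 'h \<Rightarrow> 'h" and De :: "'h \<Rightarrow> ('h \<times> 'h) list set" and alH :: "'h \<Rightarrow> 'h"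
    and muA :: "'a \<Rightarrow> 'a \<Rightarrow> 'a" and alA :: "'a \<Rightarrow> 'a" and act :: "'h \<Rightarrow> 'a \<Rightarrow> 'a"
  assumes "hom_bialg H muH De alH"
    and "module_hom_alg H muH De alH A muA alA act"
    and "bij_betw alH (vcar H) (vcar H)"
    and "bij_betw alA (vcar A) (vcar A)"
  shows "comodule_hom_alg (tsp A H) (smash_mult A H muA alA muH De alH act) (tmap A H alA alH)
           H muH De alH (smash_rho A H alA De)"
proof -
  interpret hom_smash H A muH De alH muA alA act by (rule hom_smash.intro) (fact assms)+
  show ?thesis
    unfolding comodule_hom_alg_def comodule_def hom_alg_mor_def
    using smash_hom_assoc rho_lin rho_alD rho_coassoc rho_mult by auto
qed

end
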